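(* Let $\alpha,\beta$ be positive real numbers. Then for all $f,g\in\mathbf H_2(\mathbb H_+)$, \[ \langle R_\alpha f,g\rangle+\langle f,R_\beta g\rangle+(\alpha+\beta)\langle R_\alpha f,R_\beta g\rangle+2\pi\,\overline{g(\beta)}\,f(\alpha)=0, \] where $\langle\cdot,\cdot\rangle$ is the inner product of $\mathbf H_2(\mathbb H_+)$.
   Context: $\mathbb H$ denotes the quaternions, $\mathbb S=\{I\in\mathbb H: I^2=-1\}$, $\mathbb C_I=\{x+Iy:x,y\in\mathbb R\}$, and $\mathbb H_+=\{p\in\mathbb H:{\rm Re}\,p>0\}$. A real differentiable function $f$ on an open set of $\mathbb H$ is (left) slice hyperholomorphic if for every $I\in\mathbb S$ its restriction $f_I$ to $\mathbb C_I$ satisfies $\frac12(\partial_x+I\partial_y)f_I(x+Iy)=0$. $\mathbf H_2(\mathbb H_+)$ is the right quaternionic Hilbert space of slice hyperholomorphic functions $f$ on $\mathbb H_+$ with $\sup_{I\in\mathbb S}\int_{-\infty}^{\infty}|f(Iy)|^2dy<\infty$; its reproducing kernel is $\frac1{2\pi}k(p,q)$ with $k(p,q)=(p+\overline q)^{-\star}$, the slice hyperholomorphic (in $p$) $\star$-inverse of $p+\overline q$, i.e. $k(p,q)=(\overline p+\overline q)(|p|^2+2{\rm Re}(p)\overline q+\overline q^{\,2})^{-1}$. For real $\alpha$ and $f$ slice hyperholomorphic near $\alpha$ with expansion $f(p)=\sum_{n\ge0}(p-\alpha)^nf_n$, $(R_\alpha f)(p)=(p-\alpha)^{-1}(f(p)-f(\alpha))=\sum_{n\ge1}(p-\alpha)^{n-1}f_n$.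 *)

theory Defs
  imports "HOL-Analysis.Analysis"
begin

section \<open>Quaternions, modelled as real^4 (components 1 = real part, 2,3,4 = i,j,k parts)\<close>

text \<open>Addition, negation, zero, real scalar multiplication and the norm (= quaternion
modulus) are those of the Euclidean space real^4. Note that the numeral 1 of real^4 is NOT
the quaternion 1; use qone / qreal instead.\<close>

type_synonym quat = "real^4"

definition Quat :: "real \<Rightarrow> real \<Rightarrow> real \<Rightarrow> real \<Rightarrow> quat" where
  "Quat a b c d = vector [a, b, c, d]"

definition qRe :: "quat \<Rightarrow> real" where
  "qRe q = q $ 1"

definition qreal :: "real \<Rightarrow> quat" where
  "qreal x = Quat x 0 0 0"

definition qone :: quat where
  "qone = qreal 1"

definition qmul :: "quat \<Rightarrow> quat \<Rightarrow> quat" where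
  "qmul p q = Quat
     (p$1*q$1 - p$2*q$2 - p$3*q$3 - p$4*q$4)
     (p$1*q$2 + p$2*q$1 + p$3*q$4 - p$4*q$3)
     (p$1*q$3 - p$2*q$4 + p$3*q$1 + p$4*q$2)
     (p$1*q$4 + p$2*q$3 - p$3*q$2 + p$4*q$1)"

definition qcnj :: "quat \<Rightarrow> quat" where
  "qcnj q = Quat (q$1) (- q$2) (- q$3) (- q$4)"

definition qinv :: "quat \<Rightarrow> quat" where
  "qinv q = (1 / (norm q)^2) *\<^sub>R qcnj q"

definition qS :: "quat set" where
  "qS = {I. qmul I I = - qone}"

definition slice_pt :: "quat \<Rightarrow> real \<Rightarrow> real \<Rightarrow> quat" where
  "slice_pt I x y = qreal x + y *\<^sub>R I"

definition Hplus :: "quat set" where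
  "Hplus = {p. qRe p > 0}"

definition slice_hol :: "quat set \<Rightarrow> (quat \<Rightarrow> quat) \<Rightarrow> bool" where
  "slice_hol U f \<longleftrightarrow> open U \<and> (\<forall>p\<in>U. f differentiable (at p)) \<and>
     (\<forall>I\<in>qS. \<forall>x y. slice_pt I x y \<in> U \<longrightarrow>
        (1/2) *\<^sub>R (vector_derivative (\<lambda>t. f (slice_pt I t y)) (at x)
                 + qmul I (vector_derivative (\<lambda>t. f (slice_pt I x t)) (at y))) = 0)"

definition H2 :: "(quat \<Rightarrow> quat) set" where
  "H2 = {f. slice_hol Hplus f \<and>
      (\<exists>B. \<forall>I\<in>qS. \<forall>x>0.
          integrable lborel (\<lambda>y. (norm (f (slice_pt I x y)))^2) \<and>
          (\<integral>y. (norm (f (slice_pt I x y)))^2 \<partial>lborel) \<le> B)}"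

text \<open>Inner product  <f,g> = int conj(g(Iy)) f(Iy) dy  (independent of I in S), the
boundary integral being the limit of the integrals over the lines Re p = x as x tends to 0+.\<close>
definition H2_inner :: "quat \<Rightarrow> (quat \<Rightarrow> quat) \<Rightarrow> (quat \<Rightarrow> quat) \<Rightarrow> quat" where
  "H2_inner I f g = Lim (at_right 0)
     (\<lambda>x::real. \<integral>y. qmul (qcnj (g (slice_pt I x y))) (f (slice_pt I x y)) \<partial>lborel)"

definition Rsh :: "real \<Rightarrow> (quat \<Rightarrow> quat) \<Rightarrow> quat \<Rightarrow> quat" where
  "Rsh \<alpha> f p = (if p = qreal \<alpha> then vector_derivative (\<lambda>t. f (qreal t)) (at \<alpha>)
                 else qmul (qinv (p - qreal \<alpha>)) (f p - f (qreal \<alpha>)))"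

end

theory Submission
  imports Defs "HOL-Complex_Analysis.Complex_Analysis" "HOL-Probability.Sinc_Integral"
begin

text \<open>
  On a line \<open>p = x + I y\<close> with \<open>0 < x < min \<alpha> \<beta>\<close> write \<open>f(p) = (p - \<alpha>) R\<^sub>\<alpha>f(p) + f(\<alpha>)\<close> and
  \<open>g(p) = (p - \<beta>) R\<^sub>\<beta>g(p) + g(\<beta>)\<close>. Since \<open>conj (p - \<beta>) + (p - \<alpha>) + \<alpha> + \<beta> = 2x\<close>, the integrand of the
  left-hand side, taken over this line, becomes
  \<open>2x conj(R\<^sub>\<beta>g) R\<^sub>\<alpha>f + conj(g(\<beta>)) R\<^sub>\<alpha>f + conj(R\<^sub>\<beta>g) f(\<alpha>)\<close>.
  Cauchy's formula on the vertical line evaluates the last two terms to \<open>-2\<pi> conj(g(\<beta>)) f(\<alpha>)\<close>, and the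
  first one vanishes as \<open>x \<rightarrow> 0+\<close>.

  All computations take place in the slice \<open>\<complex>\<^sub>I\<close>: choosing a unit \<open>J\<close> orthogonal to \<open>1\<close> and \<open>I\<close>, a
  quaternion splits as \<open>z\<^sub>1 + z\<^sub>2 J\<close> with \<open>z\<^sub>1, z\<^sub>2 \<in> \<complex>\<^sub>I\<close>, and the two components of a slice
  hyperholomorphic function are holomorphic. The line integrals converge as \<open>x \<rightarrow> 0+\<close>: for holomorphic
  functions whose \<open>L\<^sup>2\<close> norms on vertical lines are bounded, the pairing of the lines \<open>Re z = x\<close> and
  \<open>Re z = s\<close> depends only on \<open>x + s\<close> (Cauchy's theorem), so the squared norm on the line \<open>Re z = x\<close> is a
  bounded midpoint convex function of \<open>x\<close>, which has a limit at \<open>0\<close>; polarization gives the pairings.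
\<close>

no_notation fps_nth (infixl \<open>$\<close> 75)

section \<open>Quaternion arithmetic\<close>

lemma Quat_nth [simp]:
  "Quat a b c d $ 1 = a" "Quat a b c d $ 2 = b" "Quat a b c d $ 3 = c" "Quat a b c d $ 4 = d"
  unfolding Quat_def vector_def by simp_all

lemma quat_eq_iff: "(p::quat) = q \<longleftrightarrow> p$1 = q$1 \<and> p$2 = q$2 \<and> p$3 = q$3 \<and> p$4 = q$4"
  by (simp add: vec_eq_iff forall_4)

lemma qmul_nth [simp]:
  "qmul p q $ 1 = p$1*q$1 - p$2*q$2 - p$3*q$3 - p$4*q$4"
  "qmul p q $ 2 = p$1*q$2 + p$2*q$1 + p$3*q$4 - p$4*q$3"
  "qmul p q $ 3 = p$1*q$3 - p$2*q$4 + p$3*q$1 + p$4*q$2"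
  "qmul p q $ 4 = p$1*q$4 + p$2*q$3 - p$3*q$2 + p$4*q$1"
  by (simp_all add: qmul_def)

lemma qcnj_nth [simp]:
  "qcnj q $ 1 = q$1" "qcnj q $ 2 = - q$2" "qcnj q $ 3 = - q$3" "qcnj q $ 4 = - q$4"
  by (simp_all add: qcnj_def)

lemma qreal_nth [simp]:
  "qreal a $ 1 = a" "qreal a $ 2 = 0" "qreal a $ 3 = 0" "qreal a $ 4 = 0"
  by (simp_all add: qreal_def)

lemma qone_nth [simp]:
  "qone $ 1 = 1" "qone $ 2 = 0" "qone $ 3 = 0" "qone $ 4 = 0"
  by (simp_all add: qone_def)

lemma inner_quat: "inner (p::quat) q = p$1*q$1 + p$2*q$2 + p$3*q$3 + p$4*q$4"
  by (simp add: inner_vec_def sum_4)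

lemma norm_quat_sq: "(norm (q::quat))\<^sup>2 = (q$1)\<^sup>2 + (q$2)\<^sup>2 + (q$3)\<^sup>2 + (q$4)\<^sup>2"
  unfolding power2_norm_eq_inner inner_quat by (simp add: power2_eq_square)

lemma qmul_assoc: "qmul (qmul a b) c = qmul a (qmul b c)"
  by (simp add: quat_eq_iff algebra_simps)

lemma qmul_add_left: "qmul (a + b) c = qmul a c + qmul b c"
  by (simp add: quat_eq_iff algebra_simps)

lemma qmul_add_right: "qmul a (b + c) = qmul a b + qmul a c"
  by (simp add: quat_eq_iff algebra_simps)

lemma qmul_scaleR_left: "qmul (r *\<^sub>R a) c = r *\<^sub>R qmul a c"
  by (simp add: quat_eq_iff algebra_simps)

lemma qmul_scaleR_right: "qmul a (r *\<^sub>R c) = r *\<^sub>R qmul a c"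
  by (simp add: quat_eq_iff algebra_simps)

lemma qmul_qone [simp]: "qmul qone a = a" "qmul a qone = a"
  by (simp_all add: quat_eq_iff)

lemma qmul_minus_left: "qmul (- a) b = - qmul a b"
  by (simp add: quat_eq_iff)

lemma qcnj_add: "qcnj (a + b) = qcnj a + qcnj b"
  and qcnj_scaleR: "qcnj (r *\<^sub>R a) = r *\<^sub>R qcnj a"
  by (simp_all add: quat_eq_iff)

lemma norm_qmul: "norm (qmul p q) = norm p * norm q"
proof -
  have "(norm (qmul p q))\<^sup>2 = (norm p * norm q)\<^sup>2"
    by (simp add: norm_quat_sq power_mult_distrib) (simp add: power2_eq_square algebra_simps)
  then show ?thesis by (simp add: power2_eq_iff_nonneg)
qed

lemma norm_qcnj [simp]: "norm (qcnj q) = norm q"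
proof -
  have "(norm (qcnj q))\<^sup>2 = (norm q)\<^sup>2" by (simp add: norm_quat_sq)
  then show ?thesis by (simp add: power2_eq_iff_nonneg)
qed

lemma qmul_qcnj_self: "qmul P (qcnj P) = qreal ((norm P)\<^sup>2)"
proof -
  have n2: "(norm P)\<^sup>2 = P$1*P$1 + P$2*P$2 + P$3*P$3 + P$4*P$4"
    unfolding norm_quat_sq by (simp add: power2_eq_square)
  show ?thesis unfolding n2 by (simp add: quat_eq_iff algebra_simps)
qed

lemma qmul_qinv_cancel_left:
  assumes "P \<noteq> 0"
  shows "qmul P (qmul (qinv P) w) = w"
proof -
  have n: "norm P \<noteq> 0" using assms by simp
  have "qmul P (qinv P) = qone"
    unfolding qinv_def qmul_scaleR_right qmul_qcnj_self using n
    by (simp add: quat_eq_iff)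
  then show ?thesis by (simp flip: qmul_assoc)
qed

lemma bounded_linear_qmul_left: "bounded_linear (\<lambda>q. qmul a q)"
proof (rule bounded_linear_intro[where K="norm a"])
  show "qmul a (x + y) = qmul a x + qmul a y" for x y by (rule qmul_add_right)
  show "qmul a (r *\<^sub>R x) = r *\<^sub>R qmul a x" for r x by (rule qmul_scaleR_right)
  show "norm (qmul a x) \<le> norm x * norm a" for x by (simp add: norm_qmul)
qed

lemma bounded_linear_qmul_right: "bounded_linear (\<lambda>q. qmul q a)"
proof (rule bounded_linear_intro[where K="norm a"])
  show "qmul (x + y) a = qmul x a + qmul y a" for x y by (rule qmul_add_left)
  show "qmul (r *\<^sub>R x) a = r *\<^sub>R qmul x a" for r x by (rule qmul_scaleR_left)
  show "norm (qmul x a) \<le> norm x * norm a" for x by (simp add: norm_qmul)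
qed

lemma bounded_linear_qcnj: "bounded_linear qcnj"
proof (rule bounded_linear_intro[where K=1])
  show "qcnj (x + y) = qcnj x + qcnj y" for x y by (rule qcnj_add)
  show "qcnj (r *\<^sub>R x) = r *\<^sub>R qcnj x" for r x by (rule qcnj_scaleR)
  show "norm (qcnj x) \<le> norm x * 1" for x by simp
qed

section \<open>Splitting a quaternion along a slice\<close>

definition qemb :: "quat \<Rightarrow> complex \<Rightarrow> quat" where
  "qemb I z = qreal (Re z) + Im z *\<^sub>R I"

definition qJ :: "quat \<Rightarrow> quat" where
  "qJ I = (SOME J. J$1 = 0 \<and> I$2*J$2 + I$3*J$3 + I$4*J$4 = 0 \<and> (J$2)\<^sup>2 + (J$3)\<^sup>2 + (J$4)\<^sup>2 = 1)"

text \<open>For \<open>I \<in> qS\<close>, \<open>1, I, J, I J\<close> (with \<open>J = qJ I\<close>) is an orthonormal basis, and every quaternion splits as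
  \<open>q = qemb I (qsplit1 I q) + qemb I (qsplit2 I q) J\<close> (lemma \<open>qsplit_recompose\<close>).\<close>
definition qsplit1 :: "quat \<Rightarrow> quat \<Rightarrow> complex" where
  "qsplit1 I q = Complex (q$1) (inner q I)"

definition qsplit2 :: "quat \<Rightarrow> quat \<Rightarrow> complex" where
  "qsplit2 I q = Complex (inner q (qJ I)) (inner q (qmul I (qJ I)))"

lemma qS_imag_unit:
  assumes "I \<in> qS"
  shows "I$1 = 0" "(I$2)\<^sup>2 + (I$3)\<^sup>2 + (I$4)\<^sup>2 = 1"
proof -
  have e: "qmul I I = - qone" using assms by (simp add: qS_def)
  have e1: "I$1*I$1 - I$2*I$2 - I$3*I$3 - I$4*I$4 = -1" using arg_cong[OF e, of "\<lambda>q. q$1"] by simp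
  have e2: "2*(I$1*I$2) = 0" using arg_cong[OF e, of "\<lambda>q. q$2"] by simp
  have e3: "2*(I$1*I$3) = 0" using arg_cong[OF e, of "\<lambda>q. q$3"] by simp
  have e4: "2*(I$1*I$4) = 0" using arg_cong[OF e, of "\<lambda>q. q$4"] by simp
  show "I$1 = 0"
  proof (rule ccontr)
    assume "I$1 \<noteq> 0"
    then have "I$2 = 0" "I$3 = 0" "I$4 = 0" using e2 e3 e4 by auto
    then have "I$1*I$1 = -1" using e1 by simp
    moreover have "I$1*I$1 \<ge> 0" by simp
    ultimately show False by simp
  qed
  then show "(I$2)\<^sup>2 + (I$3)\<^sup>2 + (I$4)\<^sup>2 = 1" using e1 by (simp add: power2_eq_square)
qed

lemma qJ_exists: fixes I :: quat shows "\<exists>J::quat. J$1 = 0 \<and> I$2*J$2 + I$3*J$3 + I$4*J$4 = 0 \<and> (J$2)\<^sup>2 + (J$3)\<^sup>2 + (J$4)\<^sup>2 = 1"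
proof (cases "I$2 = 0 \<and> I$3 = 0")
  case True
  then show ?thesis by (intro exI[of _ "Quat 0 1 0 0"]) simp
next
  case False
  define r where "r = sqrt ((I$2)\<^sup>2 + (I$3)\<^sup>2)"
  have r2: "r\<^sup>2 = (I$2)\<^sup>2 + (I$3)\<^sup>2" by (simp add: r_def)
  have "(I$2)\<^sup>2 + (I$3)\<^sup>2 > 0" using False by (auto simp: add_pos_nonneg add_nonneg_pos)
  then have r: "r > 0" by (simp add: r_def)
  show ?thesis
  proof (intro exI[of _ "Quat 0 (- I$3 / r) (I$2 / r) 0"] conjI)
    show "(Quat 0 (- I$3 / r) (I$2 / r) 0) $ 1 = 0" by simp
    show "I$2 * Quat 0 (- I$3 / r) (I$2 / r) 0 $ 2 + I$3 * Quat 0 (- I$3 / r) (I$2 / r) 0 $ 3 + I$4 * Quat 0 (- I$3 / r) (I$2 / r) 0 $ 4 = 0"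
      by (simp add: field_simps)
    show "(Quat 0 (- I$3 / r) (I$2 / r) 0 $ 2)\<^sup>2 + (Quat 0 (- I$3 / r) (I$2 / r) 0 $ 3)\<^sup>2 + (Quat 0 (- I$3 / r) (I$2 / r) 0 $ 4)\<^sup>2 = 1"
    proof -
      have "(I$3)\<^sup>2 / r\<^sup>2 + (I$2)\<^sup>2 / r\<^sup>2 = ((I$2)\<^sup>2 + (I$3)\<^sup>2) / r\<^sup>2" by (simp add: add_divide_distrib)
      also have "\<dots> = 1" using r by (simp add: r2[symmetric])
      finally show ?thesis by (simp add: power_divide)
    qed
  qed
qed

lemma qJ_orthonormal:
  "qJ I $ 1 = 0" "I$2*qJ I$2 + I$3*qJ I$3 + I$4*qJ I$4 = 0" "(qJ I$2)\<^sup>2 + (qJ I$3)\<^sup>2 + (qJ I$4)\<^sup>2 = 1"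
  using someI_ex[OF qJ_exists[of I]] by (simp_all add: qJ_def)

lemma qemb_nth [simp]:
  "qemb I z $ 1 = Re z + Im z * I$1" "qemb I z $ 2 = Im z * I$2" "qemb I z $ 3 = Im z * I$3" "qemb I z $ 4 = Im z * I$4"
  by (simp_all add: qemb_def)

lemma slice_pt_qemb: "slice_pt I x y = qemb I (Complex x y)"
  by (simp add: slice_pt_def qemb_def)

lemma qreal_qemb: "qreal r = qemb I (of_real r)"
  by (simp add: qemb_def)

lemma qemb_add: "qemb I (a + b) = qemb I a + qemb I b"
  and qemb_diff: "qemb I (a - b) = qemb I a - qemb I b"
  and qemb_scaleR: "qemb I (r *\<^sub>R a) = r *\<^sub>R qemb I a"
  by (simp_all add: quat_eq_iff algebra_simps)

lemma bounded_linear_qemb: "bounded_linear (qemb I)"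
proof (rule bounded_linear_intro[where K="1 + norm I"])
  show "qemb I (x + y) = qemb I x + qemb I y" for x y by (rule qemb_add)
  show "qemb I (r *\<^sub>R x) = r *\<^sub>R qemb I x" for r x by (rule qemb_scaleR)
  show "norm (qemb I x) \<le> norm x * (1 + norm I)" for x
  proof -
    have "norm (qemb I x) \<le> norm (qreal (Re x)) + norm (Im x *\<^sub>R I)"
      unfolding qemb_def by (rule norm_triangle_ineq)
    also have "norm (qreal (Re x)) = \<bar>Re x\<bar>"
    proof -
      have "(norm (qreal (Re x)))\<^sup>2 = (Re x)\<^sup>2" by (simp add: norm_quat_sq)
      then show ?thesis by (metis abs_norm_cancel power2_eq_iff_nonneg abs_ge_zero norm_ge_zero power2_abs)
    qed
    also have "norm (Im x *\<^sub>R I) = \<bar>Im x\<bar> * norm I" by simp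
    also have "\<bar>Re x\<bar> + \<bar>Im x\<bar> * norm I \<le> norm x + norm x * norm I"
      by (intro add_mono mult_right_mono abs_Re_le_cmod abs_Im_le_cmod) auto
    finally show ?thesis by (simp add: algebra_simps)
  qed
qed

lemma bounded_linear_Complex_inner:
  fixes a b :: "'a::real_inner"
  shows "bounded_linear (\<lambda>q. Complex (inner q a) (inner q b))"
proof (rule bounded_linear_intro[where K="norm a + norm b"])
  show "Complex (inner (x + y) a) (inner (x + y) b) = Complex (inner x a) (inner x b) + Complex (inner y a) (inner y b)" for x y
    by (simp add: complex_eq_iff inner_add_left)
  show "Complex (inner (r *\<^sub>R x) a) (inner (r *\<^sub>R x) b) = r *\<^sub>R Complex (inner x a) (inner x b)" for r x
    by (simp add: complex_eq_iff)
  show "cmod (Complex (inner x a) (inner x b)) \<le> norm x * (norm a + norm b)" for x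
  proof -
    have "cmod (Complex (inner x a) (inner x b)) \<le> \<bar>inner x a\<bar> + \<bar>inner x b\<bar>"
      using cmod_le[of "Complex (inner x a) (inner x b)"] by simp
    also have "\<dots> \<le> norm x * norm a + norm x * norm b"
      by (intro add_mono Cauchy_Schwarz_ineq2)
    finally show ?thesis by (simp add: algebra_simps)
  qed
qed

lemma bounded_linear_qsplit1: "bounded_linear (qsplit1 I)"
proof -
  have "qsplit1 I = (\<lambda>q. Complex (inner q (axis 1 1)) (inner q I))"
    by (simp add: fun_eq_iff qsplit1_def inner_axis)
  then show ?thesis by (simp add: bounded_linear_Complex_inner)
qed

lemma bounded_linear_qsplit2: "bounded_linear (qsplit2 I)"
  unfolding qsplit2_def[abs_def] by (rule bounded_linear_Complex_inner)

lemma qS_qJ_coords: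
  assumes "I \<in> qS"
  shows "I$1 = 0" "(I$2)\<^sup>2 + (I$3)\<^sup>2 + (I$4)\<^sup>2 = 1" "qJ I$1 = 0"
    "I$2*qJ I$2 + I$3*qJ I$3 + I$4*qJ I$4 = 0" "(qJ I$2)\<^sup>2 + (qJ I$3)\<^sup>2 + (qJ I$4)\<^sup>2 = 1"
  using qS_imag_unit[OF assms] qJ_orthonormal[of I] by auto

lemma qsplit_recompose:
  assumes "I \<in> qS"
  shows "q = qemb I (qsplit1 I q) + qmul (qemb I (qsplit2 I q)) (qJ I)"
  using qS_qJ_coords[OF assms]
  apply (simp add: quat_eq_iff qsplit1_def qsplit2_def inner_quat)
  apply (intro conjI)
     apply algebra+
  done

lemma qsplit1_qmul_qemb:
  assumes "I \<in> qS"
  shows "qsplit1 I (qmul (qemb I z) q) = z * qsplit1 I q"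
  using qS_qJ_coords[OF assms]
  apply (simp add: complex_eq_iff qsplit1_def inner_quat)
  apply (intro conjI)
     apply algebra+
  done

lemma qsplit2_qmul_qemb:
  assumes "I \<in> qS"
  shows "qsplit2 I (qmul (qemb I z) q) = z * qsplit2 I q"
  using qS_qJ_coords[OF assms]
  apply (simp add: complex_eq_iff qsplit2_def inner_quat)
  apply (intro conjI)
     apply algebra+
  done

lemma norm_qsplit_sq:
  assumes "I \<in> qS"
  shows "(norm q)\<^sup>2 = (cmod (qsplit1 I q))\<^sup>2 + (cmod (qsplit2 I q))\<^sup>2"
  using qS_qJ_coords[OF assms]
  apply (simp add: norm_quat_sq cmod_power2 qsplit1_def qsplit2_def inner_quat)
  apply algebra
  done

lemma qsplit_norm_le:
  assumes "I \<in> qS"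
  shows "(cmod (qsplit1 I q))\<^sup>2 \<le> (norm q)\<^sup>2" "(cmod (qsplit2 I q))\<^sup>2 \<le> (norm q)\<^sup>2"
  using norm_qsplit_sq[OF assms, of q] by simp_all

lemma qsplit1_qcnj_qmul:
  assumes "I \<in> qS"
  shows "qsplit1 I (qmul (qcnj k) h) = cnj (qsplit1 I k) * qsplit1 I h + qsplit2 I k * cnj (qsplit2 I h)"
  using qS_qJ_coords[OF assms]
  apply (simp add: complex_eq_iff qsplit1_def qsplit2_def inner_quat)
  apply (intro conjI)
     apply algebra+
  done

lemma qsplit2_qcnj_qmul:
  assumes "I \<in> qS"
  shows "qsplit2 I (qmul (qcnj k) h) = cnj (qsplit1 I k) * qsplit2 I h - qsplit2 I k * cnj (qsplit1 I h)"
  using qS_qJ_coords[OF assms]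
  apply (simp add: complex_eq_iff qsplit1_def qsplit2_def inner_quat)
  apply (intro conjI)
     apply algebra+
  done

lemma qcnj_qemb:
  assumes "I \<in> qS"
  shows "qcnj (qemb I z) = qemb I (cnj z)"
  using qS_qJ_coords[OF assms] by (simp add: quat_eq_iff)

lemma norm_qemb:
  assumes "I \<in> qS"
  shows "norm (qemb I z) = cmod z"
proof -
  have "(norm (qemb I z))\<^sup>2 = (cmod z)\<^sup>2"
    using qS_qJ_coords[OF assms]
    apply (simp add: norm_quat_sq cmod_power2)
    apply algebra
    done
  then show ?thesis by (simp add: power2_eq_iff_nonneg)
qed

lemma qinv_qemb:
  assumes "I \<in> qS"
  shows "qinv (qemb I z) = qemb I (inverse z)"
proof -
  have "qinv (qemb I z) = (1 / (cmod z)\<^sup>2) *\<^sub>R qemb I (cnj z)"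
    by (simp add: qinv_def norm_qemb[OF assms] qcnj_qemb[OF assms])
  also have "\<dots> = qemb I ((1 / (cmod z)\<^sup>2) *\<^sub>R cnj z)" by (simp add: qemb_scaleR)
  also have "(1 / (cmod z)\<^sup>2) *\<^sub>R cnj z = inverse z"
  proof -
    have cm: "cmod z * cmod z = Re z * Re z + Im z * Im z" using cmod_power2[of z] by (simp add: power2_eq_square)
    show ?thesis using cm by (simp add: complex_eq_iff Re_divide Im_divide inverse_eq_divide power2_eq_square)
  qed
  finally show ?thesis .
qed

lemma qRe_qemb:
  assumes "I \<in> qS"
  shows "qRe (qemb I z) = Re z"
  using qS_qJ_coords[OF assms] by (simp add: qRe_def)

lemma qreal_scaleR: "qreal t = t *\<^sub>R qone"
  by (simp add: quat_eq_iff)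

lemma qemb_decomp: "qemb I h = Re h *\<^sub>R qone + Im h *\<^sub>R I"
  by (simp add: qemb_def qreal_scaleR)

lemma qemb_ii: "qemb I \<i> = I"
  by (simp add: qemb_def quat_eq_iff)

lemma slice_pt_neq_qreal:
  assumes "I \<in> qS" "x \<noteq> a"
  shows "slice_pt I x y \<noteq> qreal a"
proof
  assume "slice_pt I x y = qreal a"
  then have "(slice_pt I x y) $ 1 = a" by simp
  then show False using assms qS_imag_unit(1)[OF assms(1)] by (simp add: slice_pt_def)
qed

lemma slice_pt_minus_qreal:
  "slice_pt I x y - qreal a = qemb I (Complex x y - of_real a)"
  by (simp add: slice_pt_qemb qreal_qemb[of a I] qemb_diff)

lemma qsplit_integral:
  assumes I: "I \<in> qS" and i1: "integrable lborel (\<lambda>y. qsplit1 I (w y))" and i2: "integrable lborel (\<lambda>y. qsplit2 I (w y))"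
  shows "integrable lborel w"
    "(\<integral>y. w y \<partial>lborel) = qemb I (\<integral>y. qsplit1 I (w y) \<partial>lborel) + qmul (qemb I (\<integral>y. qsplit2 I (w y) \<partial>lborel)) (qJ I)"
proof -
  have e: "w = (\<lambda>y. qemb I (qsplit1 I (w y)) + qmul (qemb I (qsplit2 I (w y))) (qJ I))"
    using qsplit_recompose[OF I] by (rule ext)
  have a: "integrable lborel (\<lambda>y. qemb I (qsplit1 I (w y)))"
    by (rule integrable_bounded_linear[OF bounded_linear_qemb i1])
  have b': "integrable lborel (\<lambda>y. qemb I (qsplit2 I (w y)))"
    by (rule integrable_bounded_linear[OF bounded_linear_qemb i2])
  have b: "integrable lborel (\<lambda>y. qmul (qemb I (qsplit2 I (w y))) (qJ I))"
    by (rule integrable_bounded_linear[OF bounded_linear_qmul_right b'])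
  show "integrable lborel w" by (subst e) (rule Bochner_Integration.integrable_add[OF a b])
  have "(\<integral>y. w y \<partial>lborel) = (\<integral>y. qemb I (qsplit1 I (w y)) \<partial>lborel) + (\<integral>y. qmul (qemb I (qsplit2 I (w y))) (qJ I) \<partial>lborel)"
    by (subst e) (rule Bochner_Integration.integral_add[OF a b])
  also have "(\<integral>y. qemb I (qsplit1 I (w y)) \<partial>lborel) = qemb I (\<integral>y. qsplit1 I (w y) \<partial>lborel)"
    by (rule integral_bounded_linear[OF bounded_linear_qemb i1])
  also have "(\<integral>y. qmul (qemb I (qsplit2 I (w y))) (qJ I) \<partial>lborel) = qmul (\<integral>y. qemb I (qsplit2 I (w y)) \<partial>lborel) (qJ I)"
    by (rule integral_bounded_linear[OF bounded_linear_qmul_right b'])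
  also have "(\<integral>y. qemb I (qsplit2 I (w y)) \<partial>lborel) = qemb I (\<integral>y. qsplit2 I (w y) \<partial>lborel)"
    by (rule integral_bounded_linear[OF bounded_linear_qemb i2])
  finally show "(\<integral>y. w y \<partial>lborel) = qemb I (\<integral>y. qsplit1 I (w y) \<partial>lborel) + qmul (qemb I (\<integral>y. qsplit2 I (w y) \<partial>lborel)) (qJ I)" .
qed

lemma slice_hol_derivative_CR:
  assumes sh: "slice_hol U f" and I: "I \<in> qS" and p: "slice_pt I x y \<in> U"
    and D: "(f has_derivative D) (at (slice_pt I x y))"
  shows "D qone + qmul I (D I) = 0"
proof -
  have lD: "linear D" using D by (rule has_derivative_linear)
  have "((\<lambda>t. slice_pt I t y) has_derivative (\<lambda>h. h *\<^sub>R qone)) (at x)"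
    unfolding slice_pt_def qreal_scaleR by (intro derivative_eq_intros) auto
  from has_derivative_compose[OF this D] have v1: "((\<lambda>t. f (slice_pt I t y)) has_vector_derivative D qone) (at x)"
    using lD by (simp add: has_vector_derivative_def linear_scale)
  have "((\<lambda>t. slice_pt I x t) has_derivative (\<lambda>h. h *\<^sub>R I)) (at y)"
    unfolding slice_pt_def by (intro derivative_eq_intros) auto
  from has_derivative_compose[OF this D] have v2: "((\<lambda>t. f (slice_pt I x t)) has_vector_derivative D I) (at y)"
    using lD by (simp add: has_vector_derivative_def linear_scale)
  have "(1/2) *\<^sub>R (vector_derivative (\<lambda>t. f (slice_pt I t y)) (at x)
               + qmul I (vector_derivative (\<lambda>t. f (slice_pt I x t)) (at y))) = 0"
    using sh I p by (simp add: slice_hol_def)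
  then show ?thesis using vector_derivative_at[OF v1] vector_derivative_at[OF v2] by simp
qed

lemma slice_hol_qsplit_holomorphic:
  assumes sh: "slice_hol Hplus f" and I: "I \<in> qS" and C: "bounded_linear C"
    and Cm: "\<And>z q. C (qmul (qemb I z) q) = z * C q"
  shows "(\<lambda>z. C (f (qemb I z))) holomorphic_on {z. 0 < Re z}"
proof -
  have oS: "open {z::complex. 0 < Re z}" using open_halfspace_Re_gt[of 0] by simp
  show ?thesis
  proof (subst holomorphic_on_open[OF oS], intro ballI)
    fix z :: complex assume z: "z \<in> {z. 0 < Re z}"
    have pz: "slice_pt I (Re z) (Im z) = qemb I z" by (simp add: slice_pt_qemb)
    have pH: "qemb I z \<in> Hplus" using z qRe_qemb[OF I] by (simp add: Hplus_def)
    then obtain D where D: "(f has_derivative D) (at (qemb I z))"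
      using sh by (auto simp: slice_hol_def differentiable_def)
    have lD: "linear D" using D by (rule has_derivative_linear)
    interpret C: bounded_linear C by (rule C)
    have CR: "D qone + qmul I (D I) = 0"
      using slice_hol_derivative_CR[OF sh I, of "Re z" "Im z" D] pz pH D by simp
    define a where "a = C (D qone)"
    have CI: "C (D I) = \<i> * a"
    proof -
      have "D qone = - qmul I (D I)" using CR by (simp add: eq_neg_iff_add_eq_0)
      then have "a = C (- qmul (qemb I \<i>) (D I))" by (simp add: a_def qemb_ii)
      also have "\<dots> = - (\<i> * C (D I))" by (simp add: C.neg Cm)
      finally show ?thesis by simp
    qed
    have "((\<lambda>w. C (f (qemb I w))) has_derivative (\<lambda>h. C (D (qemb I h)))) (at z)"
      using C.has_derivative[OF has_derivative_compose[OF bounded_linear.has_derivative[OF bounded_linear_qemb has_derivative_ident] D]]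
      by simp
    moreover have "(\<lambda>h. C (D (qemb I h))) = (\<lambda>h. a * h)"
    proof
      fix h :: complex
      have "C (D (qemb I h)) = Re h *\<^sub>R a + Im h *\<^sub>R (\<i> * a)"
        using lD by (simp add: qemb_decomp linear_add linear_scale C.add C.scaleR a_def CI)
      also have "\<dots> = a * h" by (simp add: scaleR_conv_of_real complex_eq_iff algebra_simps)
      finally show "C (D (qemb I h)) = a * h" .
    qed
    ultimately show "\<exists>f'. ((\<lambda>z. C (f (qemb I z))) has_field_derivative f') (at z)"
      by (auto simp: has_field_derivative_def)
  qed
qed

section \<open>Integrals over vertical lines\<close>

lemma integrable_inverse_1_plus_square_lborel: "integrable lborel (\<lambda>x::real. inverse (1 + x^2))"
  and integral_inverse_1_plus_square_lborel: "(\<integral>x. inverse (1 + x^2) \<partial>lborel) = pi"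
proof -
  have "einterval (-\<infinity>) \<infinity> = (UNIV::real set)" by (auto simp: einterval_def)
  then show "integrable lborel (\<lambda>x::real. inverse (1 + x^2))"
    using integrable_inverse_1_plus_square by (simp add: set_integrable_def)
  show "(\<integral>x. inverse (1 + x^2) \<partial>lborel) = pi"
    using LBINT_inverse_1_plus_square \<open>einterval (-\<infinity>) \<infinity> = UNIV\<close>
    by (simp add: interval_lebesgue_integral_def set_lebesgue_integral_def)
qed

lemma integrable_inverse_sq_plus_sq:
  fixes c :: real assumes "c \<noteq> 0"
  shows "integrable lborel (\<lambda>y. 1 / (c^2 + y^2))"
proof -
  have "integrable lborel (\<lambda>x. inverse (1 + ((0::real) + (1/c) * x)^2))"
    using lborel_integrable_real_affine[OF integrable_inverse_1_plus_square_lborel, of "1/c" 0] assms by simp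
  then have "integrable lborel (\<lambda>x. (1/c^2) * inverse (1 + ((0::real) + (1/c) * x)^2))"
    by (rule integrable_mult_right)
  moreover have "(1/c^2) * inverse (1 + ((0::real) + (1/c) * x)^2) = 1 / (c^2 + x^2)" for x
    using assms by (simp add: field_simps power2_eq_square)
  ultimately show ?thesis by simp
qed

lemma integral_poisson_kernel:
  fixes c :: real assumes "c > 0"
  shows "(\<integral>y. c / (c^2 + y^2) \<partial>lborel) = pi"
proof -
  have "(\<integral>y. c / (c^2 + y^2) \<partial>lborel) = \<bar>c\<bar> * (\<integral>x. c / (c^2 + (0 + c * x)^2) \<partial>lborel)"
    using assms lborel_integral_real_affine[of c "\<lambda>y::real. c / (c^2 + y^2)" 0] by simp
  moreover have "c / (c^2 + (0 + c * x)^2) = (1/c) * inverse (1 + x^2)" for x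
  proof -
    have p: "1 + x^2 > 0" by (simp add: add_pos_nonneg)
    have "c^2 + (0 + c * x)^2 = c * (c * (1+x^2))" by (simp add: power2_eq_square algebra_simps)
    moreover have "c/(c*(c*t)) = (1/c)*inverse t" if "t > 0" for t
      using assms that by (simp add: field_simps)
    ultimately show ?thesis using p by metis
  qed
  ultimately show ?thesis using assms integral_inverse_1_plus_square_lborel by simp
qed

lemma nn_integral_inverse_sq_plus_sq:
  fixes c :: real assumes "c > 0"
  shows "(\<integral>\<^sup>+y. ennreal (1 / (c^2 + y^2)) \<partial>lborel) = ennreal (pi / c)"
proof -
  have "(\<integral>\<^sup>+y. ennreal (1 / (c^2 + y^2)) \<partial>lborel) = ennreal (\<integral>y. 1 / (c^2 + y^2) \<partial>lborel)"
    using assms integrable_inverse_sq_plus_sq[of c] by (intro nn_integral_eq_integral) auto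
  also have "(\<integral>y. 1 / (c^2 + y^2) \<partial>lborel) = (\<integral>y. (1/c) * (c / (c^2 + y^2)) \<partial>lborel)"
    using assms by (intro Bochner_Integration.integral_cong) auto
  also have "\<dots> = (1/c) * (\<integral>y. c / (c^2 + y^2) \<partial>lborel)" by (rule integral_mult_right_zero)
  also have "\<dots> = pi / c" using integral_poisson_kernel[OF assms] by simp
  finally show ?thesis .
qed

lemma contour_integral_linepath_same_Im:
  assumes "a < b"
  shows "contour_integral (linepath (Complex a c) (Complex b c)) f = integral {a..b} (\<lambda>x. f (Complex x c))"
proof -
  define z where "z = Complex a c"
  define z' where "z' = Complex b c"
  have "contour_integral (linepath z z') f =
         (z' - z) * integral {0..1} (\<lambda>x. f (linepath z z' x))"
    by (simp add: contour_integral_integral)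
  also have "z' - z = of_real (b - a)"
    by (simp add: z_def z'_def complex_eq_iff)
  also have "integral {0..1} (\<lambda>x. f (linepath z z' x)) =
             integral {0..1} (\<lambda>x. f (Complex (linepath a b x) c))"
  proof -
    have eq: "linepath z z' x = Complex (linepath a b x) c" for x
      by (simp add: linepath_def z_def z'_def complex_eq_iff algebra_simps)
    show ?thesis by (simp add: eq)
  qed
  also have "\<dots> = integral {0..(b - a) / (b - a)} (\<lambda>x. f (Complex (a + (b - a) * x) c))"
    using \<open>a < b\<close> by (simp add: algebra_simps linepath_def)
  also have "{0..(b - a) / (b - a)} = (\<lambda>x. x / (b - a)) ` {0..b - a}"
    using \<open>a < b\<close> by simp
  also have "integral \<dots> (\<lambda>x. f (Complex (a + (b - a) * x) c)) =
             integral {a-a..b-a} (\<lambda>x. f (Complex (x + a) c)) / of_real (b - a)"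
    using \<open>a < b\<close> by (subst integral_stretch_real) (auto simp: scaleR_conv_of_real add_ac)
  also have "\<dots> = integral {a..b} (\<lambda>x. f (Complex x c)) / of_real (b - a)"
    by (subst integral_shift_real_ivl) (rule refl)
  finally show ?thesis
    using \<open>a < b\<close> by (simp add: z_def z'_def)
qed

lemma norm_contour_integral_horizontal_le:
  assumes "a < b" "continuous_on {a..b} (\<lambda>t. f (Complex t c))"
  shows "cmod (contour_integral (linepath (Complex a c) (Complex b c)) f) \<le> integral {a..b} (\<lambda>t. cmod (f (Complex t c)))"
proof -
  have "(\<lambda>t. f (Complex t c)) integrable_on {a..b}"
    using assms(2) by (rule integrable_continuous_real)
  moreover have "(\<lambda>t. cmod (f (Complex t c))) integrable_on {a..b}"
    using assms(2) by (intro integrable_continuous_real continuous_intros)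
  ultimately show ?thesis
    unfolding contour_integral_linepath_same_Im[OF assms(1)]
    by (intro integral_norm_bound_integral) auto
qed

lemma tendsto_integral_symmetric_interval:
  fixes h :: "real \<Rightarrow> 'a::{banach, second_countable_topology}"
  assumes "integrable lborel h"
  shows "((\<lambda>R. \<integral>y. indicator {-R..R} y *\<^sub>R h y \<partial>lborel) \<longlongrightarrow> (\<integral>y. h y \<partial>lborel)) at_top"
proof (rule tendsto_at_topI_sequentially)
  fix X :: "nat \<Rightarrow> real" assume X: "filterlim X at_top sequentially"
  show "(\<lambda>n. \<integral>y. indicator {-X n..X n} y *\<^sub>R h y \<partial>lborel) \<longlonglongrightarrow> (\<integral>y. h y \<partial>lborel)"
  proof (rule integral_dominated_convergence)
    show "integrable lborel (\<lambda>x. norm (h x))"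
      by (rule integrable_norm) fact
    show "AE x in lborel. (\<lambda>n. indicator {-X n..X n} x *\<^sub>R h x) \<longlonglongrightarrow> h x"
    proof
      fix x
      from X have "eventually (\<lambda>n. \<bar>x\<bar> \<le> X n) sequentially"
        unfolding filterlim_at_top_ge[where c="\<bar>x\<bar>"] by auto
      then have "eventually (\<lambda>n. indicator {-X n..X n} x *\<^sub>R h x = h x) sequentially"
        by (rule eventually_mono) (auto split: split_indicator)
      then show "(\<lambda>n. indicator {-X n..X n} x *\<^sub>R h x) \<longlonglongrightarrow> h x"
        by (rule tendsto_eventually)
    qed
    show "h \<in> borel_measurable lborel" using assms by auto
    fix n show "AE x in lborel. norm (indicator {-X n..X n} x *\<^sub>R h x) \<le> norm (h x)"
      by (auto split: split_indicator)
  next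
    fix n show "(\<lambda>y. indicator {-X n..X n} y *\<^sub>R h y) \<in> borel_measurable lborel"
      using assms by (intro borel_measurable_scaleR borel_measurable_indicator) auto
  qed
qed

lemma integral_symmetric_interval_eq_lborel:
  fixes h :: "real \<Rightarrow> complex"
  assumes "integrable lborel h"
  shows "integral {-R..R} h = (\<integral>y. indicator {-R..R} y *\<^sub>R h y \<partial>lborel)"
proof -
  have "set_integrable lborel {-R..R} h"
    unfolding set_integrable_def using assms by (intro integrable_mult_indicator) auto
  from set_borel_integral_eq_integral(2)[OF this] show ?thesis
    by (simp add: set_lebesgue_integral_def)
qed

lemma rectangle_vertical_sides_estimate:
  fixes P :: "complex \<Rightarrow> complex"
  assumes ab: "a < b" and R: "R > 0"
    and rect: "contour_integral (rectpath (Complex a (-R)) (Complex b R)) P = c"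
    and cont: "continuous_on {z. Re z = a \<or> Re z = b \<or> (a \<le> Re z \<and> Re z \<le> b \<and> \<bar>Im z\<bar> = R)} P"
  shows "cmod (\<i> * (integral {-R..R} (\<lambda>y. P (Complex b y)) - integral {-R..R} (\<lambda>y. P (Complex a y))) - c)
           \<le> integral {a..b} (\<lambda>t. cmod (P (Complex t R)) + cmod (P (Complex t (-R))))"
proof -
  define D where "D = {z. Re z = a \<or> Re z = b \<or> (a \<le> Re z \<and> Re z \<le> b \<and> \<bar>Im z\<bar> = R)}"
  define a1 where "a1 = Complex a (-R)"
  define a2 where "a2 = Complex b (-R)"
  define a3 where "a3 = Complex b R"
  define a4 where "a4 = Complex a R"
  have seg: "closed_segment a1 a2 \<subseteq> D" "closed_segment a2 a3 \<subseteq> D"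
    "closed_segment a3 a4 \<subseteq> D" "closed_segment a4 a1 \<subseteq> D"
    using R ab by (auto simp: a1_def a2_def a3_def a4_def D_def closed_segment_same_Im
        closed_segment_same_Re closed_segment_eq_real_ivl)
  have contD: "continuous_on D P" using cont by (simp add: D_def)
  have ci: "P contour_integrable_on linepath u v" if "closed_segment u v \<subseteq> D" for u v
    using that contD by (intro contour_integrable_continuous_linepath) (auto intro: continuous_on_subset)
  have reverse: "contour_integral (linepath u v) P = - contour_integral (linepath v u) P"
    if "closed_segment u v \<subseteq> D" for u v
    using that contD by (intro contour_integral_reverse_linepath) (auto intro: continuous_on_subset)
  have contR: "continuous_on {a..b} (\<lambda>t. P (Complex t y))" if "y = R \<or> y = -R" for y
    using that R by (intro continuous_on_compose2[OF contD]) (auto simp: D_def intro!: continuous_intros)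
  have rp: "rectpath a1 a3 = linepath a1 a2 +++ linepath a2 a3 +++ linepath a3 a4 +++ linepath a4 a1"
    by (simp add: rectpath_def Let_def a1_def a2_def a3_def a4_def)
  have "c = contour_integral (linepath a1 a2) P + contour_integral (linepath a2 a3) P
          + contour_integral (linepath a3 a4) P + contour_integral (linepath a4 a1) P"
    unfolding rect[symmetric] a1_def[symmetric] a3_def[symmetric] rp using ci seg
    by (simp add: contour_integrable_joinI valid_path_join)
  moreover have "contour_integral (linepath a2 a3) P = \<i> * integral {-R..R} (\<lambda>y. P (Complex b y))"
    unfolding a2_def a3_def using R by (intro contour_integral_linepath_same_Re) auto
  moreover have "contour_integral (linepath a1 a4) P = \<i> * integral {-R..R} (\<lambda>y. P (Complex a y))"
    unfolding a1_def a4_def using R by (intro contour_integral_linepath_same_Re) auto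
  ultimately have "\<i> * (integral {-R..R} (\<lambda>y. P (Complex b y)) - integral {-R..R} (\<lambda>y. P (Complex a y))) - c
      = contour_integral (linepath a4 a3) P - contour_integral (linepath a1 a2) P"
    using reverse[OF seg(3)] reverse[OF seg(4)] by (simp add: algebra_simps)
  also have "cmod \<dots> \<le> cmod (contour_integral (linepath a1 a2) P) + cmod (contour_integral (linepath a4 a3) P)"
    by (metis norm_triangle_ineq4 add.commute)
  also have "\<dots> \<le> integral {a..b} (\<lambda>t. cmod (P (Complex t (-R)))) + integral {a..b} (\<lambda>t. cmod (P (Complex t R)))"
    unfolding a1_def a2_def a3_def a4_def by (intro add_mono norm_contour_integral_horizontal_le ab contR) auto
  also have "\<dots> = integral {a..b} (\<lambda>t. cmod (P (Complex t R)) + cmod (P (Complex t (-R))))"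
    using contR by (subst integral_add) (auto intro!: integrable_continuous_real continuous_intros)
  finally show ?thesis .
qed

text \<open>A positive lower bound for \<open>\<Phi>\<close> on a half line would contradict the finiteness of its integral.\<close>
lemma tendsto_eq_of_nn_integral_tail_finite:
  fixes W :: "real \<Rightarrow> 'a::real_normed_vector"
  assumes lim: "(W \<longlongrightarrow> V) at_top"
    and bound: "eventually (\<lambda>R. ennreal (norm (W R - c)) \<le> \<Phi> R) at_top"
    and tail: "(\<integral>\<^sup>+y. indicator {R0..} y * \<Phi> y \<partial>lborel) < \<infinity>"
  shows "V = c"
proof (rule ccontr)
  assume "V \<noteq> c"
  define d where "d = norm (V - c)"
  have d: "d > 0" using \<open>V \<noteq> c\<close> by (simp add: d_def)
  have "eventually (\<lambda>R. dist (W R) V < d/2 \<and> ennreal (norm (W R - c)) \<le> \<Phi> R) at_top"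
    using tendstoD[OF lim, of "d/2"] d bound by (auto intro: eventually_conj)
  then obtain R1 where R1: "\<And>R. R \<ge> R1 \<Longrightarrow> dist (W R) V < d/2 \<and> ennreal (norm (W R - c)) \<le> \<Phi> R"
    by (auto simp: eventually_at_top_linorder)
  define R2 where "R2 = max R1 R0"
  have big: "ennreal (d/2) \<le> \<Phi> R" if "R \<ge> R2" for R
  proof -
    have "dist (W R) V < d/2" using R1 that by (simp add: R2_def)
    then have "norm (W R - c) \<ge> d/2"
      using norm_triangle_ineq2[of "V - c" "V - W R"] by (simp add: d_def dist_norm norm_minus_commute)
    then have "ennreal (d/2) \<le> ennreal (norm (W R - c))" by (rule ennreal_leI)
    also have "\<dots> \<le> \<Phi> R" using R1 that by (simp add: R2_def)
    finally show ?thesis .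
  qed
  define T where "T = (\<integral>\<^sup>+y. indicator {R0..} y * \<Phi> y \<partial>lborel)"
  define N where "N = 2 * (enn2real T + 1) / d"
  have N: "N \<ge> 0" using d by (simp add: N_def)
  have "ennreal (d/2 * N) = ennreal (d/2) * ennreal N" using d N by (intro ennreal_mult) auto
  also have "\<dots> = (\<integral>\<^sup>+y. ennreal (d/2) * indicator {R2..R2+N} y \<partial>lborel)"
    using N by (subst nn_integral_cmult_indicator) auto
  also have "\<dots> \<le> T"
    unfolding T_def using big by (intro nn_integral_mono) (auto simp: R2_def split: split_indicator)
  finally have "enn2real (ennreal (d/2 * N)) \<le> enn2real T"
    using tail by (intro enn2real_mono) (simp_all add: T_def)
  then have "d/2 * N \<le> enn2real T" using d N by simp
  moreover have "d/2 * N = enn2real T + 1" using d by (simp add: N_def)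
  ultimately show False by simp
qed

lemma vertical_lines_integral_difference:
  fixes P :: "complex \<Rightarrow> complex" and a b R0 :: real and c :: complex
  assumes ab: "a < b"
  and rect: "\<And>R. R \<ge> R0 \<Longrightarrow> R > 0 \<Longrightarrow> contour_integral (rectpath (Complex a (-R)) (Complex b R)) P = c"
  and cont: "continuous_on {z. Re z = a \<or> Re z = b \<or> (a \<le> Re z \<and> Re z \<le> b \<and> R0 \<le> \<bar>Im z\<bar>)} P"
  and ia: "integrable lborel (\<lambda>y. P (Complex a y))"
  and ib: "integrable lborel (\<lambda>y. P (Complex b y))"
  and tail: "(\<integral>\<^sup>+y. indicator {R0..} y * (\<integral>\<^sup>+t. indicator {a..b} t * ennreal (cmod (P (Complex t y)) + cmod (P (Complex t (-y)))) \<partial>lborel) \<partial>lborel) < \<infinity>"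
  shows "\<i> * ((\<integral>y. P (Complex b y) \<partial>lborel) - (\<integral>y. P (Complex a y) \<partial>lborel)) = c"
proof (rule tendsto_eq_of_nn_integral_tail_finite[OF _ _ tail])
  show "((\<lambda>R. \<i> * (integral {-R..R} (\<lambda>y. P (Complex b y)) - integral {-R..R} (\<lambda>y. P (Complex a y))))
      \<longlongrightarrow> \<i> * ((\<integral>y. P (Complex b y) \<partial>lborel) - (\<integral>y. P (Complex a y) \<partial>lborel))) at_top"
    unfolding integral_symmetric_interval_eq_lborel[OF ia] integral_symmetric_interval_eq_lborel[OF ib]
    by (intro tendsto_mult tendsto_diff tendsto_const tendsto_integral_symmetric_interval ia ib)
next
  have "eventually (\<lambda>R. R \<ge> max R0 1) at_top" by (rule eventually_ge_at_top)
  then show "eventually (\<lambda>R. ennreal (cmod (\<i> * (integral {-R..R} (\<lambda>y. P (Complex b y)) - integral {-R..R} (\<lambda>y. P (Complex a y))) - c))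
      \<le> (\<integral>\<^sup>+t. indicator {a..b} t * ennreal (cmod (P (Complex t R)) + cmod (P (Complex t (-R)))) \<partial>lborel)) at_top"
  proof (rule eventually_mono)
  fix R assume R: "R \<ge> max R0 1"
  have contR: "continuous_on {a..b} (\<lambda>t. P (Complex t y))" if "y = R \<or> y = -R" for y
    using that R by (intro continuous_on_compose2[OF cont]) (auto intro!: continuous_intros)
  have hi: "((\<lambda>t. cmod (P (Complex t R)) + cmod (P (Complex t (-R)))) has_integral
         integral {a..b} (\<lambda>t. cmod (P (Complex t R)) + cmod (P (Complex t (-R))))) {a..b}"
    using contR by (intro integrable_integral integrable_continuous_real continuous_intros) auto
  have "cmod (\<i> * (integral {-R..R} (\<lambda>y. P (Complex b y)) - integral {-R..R} (\<lambda>y. P (Complex a y))) - c)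
      \<le> integral {a..b} (\<lambda>t. cmod (P (Complex t R)) + cmod (P (Complex t (-R))))"
    using R by (intro rectangle_vertical_sides_estimate ab rect continuous_on_subset[OF cont]) auto
  then show "ennreal (cmod (\<i> * (integral {-R..R} (\<lambda>y. P (Complex b y)) - integral {-R..R} (\<lambda>y. P (Complex a y))) - c))
      \<le> (\<integral>\<^sup>+t. indicator {a..b} t * ennreal (cmod (P (Complex t R)) + cmod (P (Complex t (-R)))) \<partial>lborel)"
    using nn_integral_has_integral_lebesgue'[OF _ hi] by (simp add: ennreal_leI mult.commute)
  qed
qed

lemma continuous_on_vertical_line:
  assumes "continuous_on S H" "\<And>y. Complex x y \<in> S"
  shows "continuous_on UNIV (\<lambda>y. H (Complex x y))"
proof -
  have "continuous_on UNIV (\<lambda>y. Complex x y)" by (intro continuous_intros)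
  moreover have "(\<lambda>y. Complex x y) ` UNIV \<subseteq> S" using assms(2) by auto
  ultimately show ?thesis using continuous_on_compose2[OF assms(1)] by blast
qed

lemma vertical_line_measurable:
  assumes "continuous_on S H" "\<And>y. Complex x y \<in> S"
  shows "(\<lambda>y. H (Complex x y)) \<in> borel_measurable borel"
  using continuous_on_vertical_line[OF assms] by (rule borel_measurable_continuous_onI)

lemma nn_integral_reflect:
  fixes f :: "real \<Rightarrow> ennreal"
  assumes "f \<in> borel_measurable borel"
  shows "(\<integral>\<^sup>+y. f (-y) \<partial>lborel) = (\<integral>\<^sup>+y. f y \<partial>lborel)"
  using nn_integral_real_affine[OF assms, of "-1" 0] by simp

text \<open>By Tonelli the double integral is at most \<open>C (b - a)\<close>.\<close>
lemma nn_integral_strip_tail_finite: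
  fixes P :: "complex \<Rightarrow> complex"
  assumes cont: "continuous_on {z. a \<le> Re z \<and> Re z \<le> b \<and> R0 \<le> \<bar>Im z\<bar>} P" and ab: "a \<le> b" and R0: "R0 \<ge> 0"
    and bound: "\<And>t. t \<in> {a..b} \<Longrightarrow> (\<integral>\<^sup>+y. indicator {R0..} y * ennreal (cmod (P (Complex t y)) + cmod (P (Complex t (-y)))) \<partial>lborel) \<le> ennreal C"
  shows "(\<integral>\<^sup>+y. indicator {R0..} y * (\<integral>\<^sup>+t. indicator {a..b} t * ennreal (cmod (P (Complex t y)) + cmod (P (Complex t (-y)))) \<partial>lborel) \<partial>lborel) < \<infinity>"
proof -
  define F where "F = (\<lambda>p::real\<times>real. cmod (P (Complex (fst p) (snd p))) + cmod (P (Complex (fst p) (- snd p))))"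
  define S where "S = {a..b} \<times> {R0..}"
  have contF: "continuous_on S F"
  proof -
    have c1: "continuous_on S (\<lambda>p::real\<times>real. Complex (fst p) (snd p))" by (intro continuous_intros)
    have c2: "continuous_on S (\<lambda>p::real\<times>real. Complex (fst p) (- snd p))" by (intro continuous_intros)
    have i1: "(\<lambda>p::real\<times>real. Complex (fst p) (snd p)) ` S \<subseteq> {z. a \<le> Re z \<and> Re z \<le> b \<and> R0 \<le> \<bar>Im z\<bar>}"
      using R0 by (auto simp: S_def)
    have i2: "(\<lambda>p::real\<times>real. Complex (fst p) (- snd p)) ` S \<subseteq> {z. a \<le> Re z \<and> Re z \<le> b \<and> R0 \<le> \<bar>Im z\<bar>}"
      using R0 by (auto simp: S_def)
    show ?thesis unfolding F_def
      using continuous_on_compose2[OF cont c1 i1] continuous_on_compose2[OF cont c2 i2]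
      by (intro continuous_intros) auto
  qed
  have meas: "(\<lambda>p. indicator S p *\<^sub>R F p) \<in> borel_measurable borel"
  proof (rule borel_measurable_continuous_on_indicator)
    show "S \<in> sets borel" unfolding S_def by (intro borel_closed closed_Times) auto
  qed (rule contF)
  define g where "g t y = ennreal (indicator S (t, y) *\<^sub>R F (t, y))" for t y
  have gmeas: "case_prod g \<in> borel_measurable (lborel \<Otimes>\<^sub>M lborel)"
    unfolding lborel_prod g_def using meas by (simp add: measurable_lborel1 case_prod_beta')
  have geq: "g t y = indicator {R0..} y * (indicator {a..b} t * ennreal (cmod (P (Complex t y)) + cmod (P (Complex t (-y)))))" for t y
    by (auto simp: g_def S_def F_def split: split_indicator)
  have "(\<integral>\<^sup>+y. indicator {R0..} y * (\<integral>\<^sup>+t. indicator {a..b} t * ennreal (cmod (P (Complex t y)) + cmod (P (Complex t (-y)))) \<partial>lborel) \<partial>lborel)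
      = (\<integral>\<^sup>+y. (\<integral>\<^sup>+t. g t y \<partial>lborel) \<partial>lborel)"
  proof (intro nn_integral_cong)
    fix y
    show "indicator {R0..} y * (\<integral>\<^sup>+t. indicator {a..b} t * ennreal (cmod (P (Complex t y)) + cmod (P (Complex t (-y)))) \<partial>lborel) = (\<integral>\<^sup>+t. g t y \<partial>lborel)"
      unfolding geq by (cases "y \<in> {R0..}") auto
  qed
  also have "\<dots> = (\<integral>\<^sup>+t. (\<integral>\<^sup>+y. g t y \<partial>lborel) \<partial>lborel)"
    by (rule lborel_pair.Fubini'[OF gmeas])
  also have "\<dots> \<le> (\<integral>\<^sup>+t. indicator {a..b} t * ennreal C \<partial>lborel)"
  proof (intro nn_integral_mono)
    fix t
    show "(\<integral>\<^sup>+y. g t y \<partial>lborel) \<le> indicator {a..b} t * ennreal C"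
    proof (cases "t \<in> {a..b}")
      case True
      have "(\<integral>\<^sup>+y. g t y \<partial>lborel) = (\<integral>\<^sup>+y. indicator {R0..} y * ennreal (cmod (P (Complex t y)) + cmod (P (Complex t (-y)))) \<partial>lborel)"
        unfolding geq using True by simp
      also have "\<dots> \<le> ennreal C" using bound[OF True] .
      finally show ?thesis using True by simp
    next
      case False
      then show ?thesis unfolding geq by simp
    qed
  qed
  also have "\<dots> = ennreal C * emeasure lborel {a..b}"
    by (subst mult.commute) (simp add: nn_integral_cmult_indicator)
  also have "\<dots> < \<infinity>" using ab by (simp add: ennreal_mult_less_top)
  finally show ?thesis .
qed

lemma mult_le_sum_squares: "0 \<le> a \<Longrightarrow> 0 \<le> b \<Longrightarrow> (a::real) * b \<le> a^2 + b^2"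
proof -
  assume "0 \<le> a" "0 \<le> b"
  have "0 \<le> (a - b)^2" by simp
  then have "2*a*b \<le> a^2 + b^2" by (simp add: power2_diff)
  moreover have "0 \<le> a*b" using \<open>0 \<le> a\<close> \<open>0 \<le> b\<close> by simp
  ultimately show ?thesis by linarith
qed

lemma nn_integral_norm_mult_le:
  fixes h g :: "real \<Rightarrow> complex"
  assumes "h \<in> borel_measurable borel" "g \<in> borel_measurable borel"
    "(\<integral>\<^sup>+y. ennreal ((cmod (h y))\<^sup>2) \<partial>lborel) \<le> ennreal B"
    "(\<integral>\<^sup>+y. ennreal ((cmod (g y))\<^sup>2) \<partial>lborel) \<le> ennreal B'"
    "B \<ge> 0" "B' \<ge> 0"
  shows "(\<integral>\<^sup>+y. ennreal (cmod (h y) * cmod (g y)) \<partial>lborel) \<le> ennreal (B + B')"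
proof -
  have "(\<integral>\<^sup>+y. ennreal (cmod (h y) * cmod (g y)) \<partial>lborel)
        \<le> (\<integral>\<^sup>+y. ennreal ((cmod (h y))\<^sup>2) + ennreal ((cmod (g y))\<^sup>2) \<partial>lborel)"
  proof (intro nn_integral_mono)
    fix y
    have "cmod (h y) * cmod (g y) \<le> (cmod (h y))\<^sup>2 + (cmod (g y))\<^sup>2"
      by (rule mult_le_sum_squares) auto
    then show "ennreal (cmod (h y) * cmod (g y)) \<le> ennreal ((cmod (h y))\<^sup>2) + ennreal ((cmod (g y))\<^sup>2)"
      by (simp add: ennreal_plus[symmetric] del: ennreal_plus)
  qed
  also have "\<dots> = (\<integral>\<^sup>+y. ennreal ((cmod (h y))\<^sup>2) \<partial>lborel) + (\<integral>\<^sup>+y. ennreal ((cmod (g y))\<^sup>2) \<partial>lborel)"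
    using assms(1,2) by (simp add: nn_integral_add)
  also have "\<dots> \<le> ennreal B + ennreal B'"
    by (intro add_mono assms(3,4))
  also have "\<dots> = ennreal (B + B')"
    using assms(5,6) by simp
  finally show ?thesis .
qed

lemma integrable_mult_cnj_L2:
  fixes h g :: "real \<Rightarrow> complex"
  assumes "h \<in> borel_measurable borel" "g \<in> borel_measurable borel"
    "(\<integral>\<^sup>+y. ennreal ((cmod (h y))\<^sup>2) \<partial>lborel) \<le> ennreal B"
    "(\<integral>\<^sup>+y. ennreal ((cmod (g y))\<^sup>2) \<partial>lborel) \<le> ennreal B'"
    "B \<ge> 0" "B' \<ge> 0"
  shows "integrable lborel (\<lambda>y. h y * cnj (g y))"
proof (rule integrableI_bounded)
  have c: "cnj \<in> borel_measurable (borel :: complex measure)"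
    by (intro borel_measurable_continuous_onI continuous_intros)
  show "(\<lambda>y. h y * cnj (g y)) \<in> borel_measurable lborel"
    using assms(1,2) measurable_compose[OF assms(2) c] by (auto intro!: borel_measurable_times)
  have "(\<integral>\<^sup>+y. ennreal (norm (h y * cnj (g y))) \<partial>lborel) = (\<integral>\<^sup>+y. ennreal (cmod (h y) * cmod (g y)) \<partial>lborel)"
    by (simp add: norm_mult)
  also have "\<dots> \<le> ennreal (B + B')" by (rule nn_integral_norm_mult_le[OF assms])
  finally show "(\<integral>\<^sup>+y. ennreal (norm (h y * cnj (g y))) \<partial>lborel) < \<infinity>"
    by (simp add: le_less_trans)
qed

section \<open>Bounded midpoint convex functions\<close>

lemma antimono_limit_at_right:
  fixes W :: "real \<Rightarrow> real"
  assumes c: "c > 0" and mono: "\<And>a b. 0 < a \<Longrightarrow> a \<le> b \<Longrightarrow> b \<le> c \<Longrightarrow> W b \<le> W a"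
    and bd: "\<And>x. 0 < x \<Longrightarrow> x \<le> c \<Longrightarrow> W x \<le> M"
  shows "\<exists>L. (W \<longlongrightarrow> L) (at_right 0)"
proof -
  define L where "L = Sup (W ` {0<..c})"
  have ne: "W ` {0<..c} \<noteq> {}" using c by auto
  have bdd: "bdd_above (W ` {0<..c})" using bd by (auto intro!: bdd_aboveI[of _ M])
  have "(W \<longlongrightarrow> L) (at_right 0)"
  proof (rule increasing_tendsto)
    have "eventually (\<lambda>x. x \<in> {0<..c}) (at_right (0::real))"
      using c by (auto simp: eventually_at_right_field intro!: exI[of _ c])
    then show "eventually (\<lambda>x. W x \<le> L) (at_right 0)"
      by (rule eventually_mono) (auto simp: L_def intro!: cSup_upper bdd)
  next
    fix y assume "y < L"
    then obtain t where t: "t \<in> {0<..c}" "y < W t"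
      using less_cSup_iff[OF ne bdd] by (auto simp: L_def)
    have "eventually (\<lambda>x. x \<in> {0<..<t}) (at_right (0::real))"
      using t by (auto simp: eventually_at_right_field intro!: exI[of _ t])
    then show "eventually (\<lambda>x. y < W x) (at_right 0)"
    proof (rule eventually_mono)
      fix x assume "x \<in> {0<..<t}"
      then have "W t \<le> W x" using t by (intro mono) auto
      then show "y < W x" using t by simp
    qed
  qed
  then show ?thesis by blast
qed

lemma midpoint_convex_increment_le:
  fixes Q :: "real \<Rightarrow> real"
  assumes mid: "\<And>x y. 0 < x \<Longrightarrow> x < y \<Longrightarrow> y < x0 \<Longrightarrow> 2 * Q ((x+y)/2) \<le> Q x + Q y"
    and a: "0 < a" and d: "0 < \<delta>"
  shows "a + real (Suc (Suc k)) * \<delta> < x0 \<Longrightarrow>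
     Q (a + real (Suc k) * \<delta>) - Q (a + real (Suc (Suc k)) * \<delta>) \<le> Q a - Q (a + \<delta>)"
proof (induction k)
  case 0
  have h: "2 * Q ((a + (a + 2*\<delta>))/2) \<le> Q a + Q (a + 2*\<delta>)"
    using 0 a d by (intro mid) auto
  have e: "(a + (a + 2*\<delta>))/2 = a + \<delta>" by simp
  have h2: "2 * Q (a + \<delta>) \<le> Q a + Q (a + 2*\<delta>)" using h unfolding e .
  have "real (Suc 0) = 1" "real (Suc (Suc 0)) = 2" by simp_all
  then show ?case using h2 by (simp only: mult_1)
next
  case (Suc k)
  have h: "2 * Q (((a + real (Suc k) * \<delta>) + (a + real (Suc (Suc (Suc k))) * \<delta>))/2) \<le> Q (a + real (Suc k) * \<delta>) + Q (a + real (Suc (Suc (Suc k))) * \<delta>)"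
    using Suc.prems a d by (intro mid) (auto intro!: add_pos_nonneg)
  have e: "((a + real (Suc k) * \<delta>) + (a + real (Suc (Suc (Suc k))) * \<delta>))/2 = a + real (Suc (Suc k)) * \<delta>"
    by (simp add: field_simps)
  have h2: "2 * Q (a + real (Suc (Suc k)) * \<delta>) \<le> Q (a + real (Suc k) * \<delta>) + Q (a + real (Suc (Suc (Suc k))) * \<delta>)"
    using h unfolding e .
  have ih: "Q (a + real (Suc k) * \<delta>) - Q (a + real (Suc (Suc k)) * \<delta>) \<le> Q a - Q (a + \<delta>)"
  proof (rule Suc.IH)
    have "real (Suc (Suc k)) * \<delta> \<le> real (Suc (Suc (Suc k))) * \<delta>" using d by (intro mult_right_mono) auto
    then show "a + real (Suc (Suc k)) * \<delta> < x0" using Suc.prems by linarith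
  qed
  show ?case using h2 ih by linarith
qed

lemma midpoint_convex_increments_le:
  fixes Q :: "real \<Rightarrow> real"
  assumes mid: "\<And>x y. 0 < x \<Longrightarrow> x < y \<Longrightarrow> y < x0 \<Longrightarrow> 2 * Q ((x+y)/2) \<le> Q x + Q y"
    and a: "0 < a" and d: "0 < \<delta>" and n: "a + real n * \<delta> < x0"
  shows "Q a - Q (a + real n * \<delta>) \<le> real n * (Q a - Q (a + \<delta>))"
proof -
  have dk: "Q (a + real k * \<delta>) - Q (a + real (Suc k) * \<delta>) \<le> Q a - Q (a + \<delta>)" if "k < n" for k
  proof (cases k)
    case 0 then show ?thesis by simp
  next
    case (Suc j)
    have "a + real (Suc (Suc j)) * \<delta> \<le> a + real n * \<delta>" using that Suc d by (intro add_left_mono mult_right_mono) auto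
    then show ?thesis using midpoint_convex_increment_le[OF mid a d, where k=j] Suc n by simp
  qed
  have "Q a - Q (a + real n * \<delta>) = (\<Sum>k<n. Q (a + real k * \<delta>) - Q (a + real (Suc k) * \<delta>))"
    by (subst sum_lessThan_telescope'[where f="\<lambda>k. Q (a + real k * \<delta>)"]) simp
  also have "\<dots> \<le> (\<Sum>k<n. Q a - Q (a + \<delta>))" by (intro sum_mono dk) auto
  also have "\<dots> = real n * (Q a - Q (a + \<delta>))" by simp
  finally show ?thesis .
qed

text \<open>Telescoping the increments over a grid of mesh \<open>b - a\<close> reaching \<open>x0/2\<close>.\<close>
lemma midpoint_convex_increment_bound:
  fixes Q :: "real \<Rightarrow> real"
  assumes x0: "x0 > 0" and bd: "\<And>x. 0 < x \<Longrightarrow> x < x0 \<Longrightarrow> 0 \<le> Q x \<and> Q x \<le> B"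
    and mid: "\<And>x y. 0 < x \<Longrightarrow> x < y \<Longrightarrow> y < x0 \<Longrightarrow> 2 * Q ((x+y)/2) \<le> Q x + Q y"
    and ab: "0 < a" "a < b" "b \<le> x0 / 4"
  shows "Q b - Q a \<le> 4 * B / x0 * (b - a)"
proof -
  have B: "B \<ge> 0" using bd[of "x0/2"] x0 by auto
  define \<delta> where "\<delta> = b - a"
  have d: "0 < \<delta>" "\<delta> < x0/4" using ab by (auto simp: \<delta>_def)
  define n where "n = nat \<lfloor>(x0/2) / \<delta>\<rfloor>"
  have r: "(x0/2)/\<delta> > 2" using d x0 by (simp add: field_simps)
  have n1: "real n > (x0/2)/\<delta> - 1" "real n \<le> (x0/2)/\<delta>"
    using r by (auto simp: n_def)
  have npos: "real n > 0" using n1 r by linarith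
  have "real n * \<delta> \<le> x0/2" using n1(2) d by (simp add: field_simps)
  then have nlt: "a + real n * \<delta> < x0" using ab by simp
  have "Q a - Q (a + real n * \<delta>) \<le> real n * (Q a - Q (a + \<delta>))"
    by (rule midpoint_convex_increments_le[OF mid ab(1) d(1) nlt])
  moreover have "0 < a + real n * \<delta>" using ab d by (simp add: add_pos_nonneg)
  moreover have "Q a - Q (a + real n * \<delta>) \<ge> - B"
    using calculation(2) bd[of a] bd[of "a + real n * \<delta>"] ab nlt d npos x0 by (auto intro: add_pos_nonneg)
  ultimately have "real n * (Q (a + \<delta>) - Q a) \<le> B" by (simp add: algebra_simps)
  then have "Q (a + \<delta>) - Q a \<le> B / real n" using npos by (simp add: field_simps mult.commute)
  also have "\<dots> \<le> 4 * B / x0 * \<delta>"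
  proof -
    have "(x0/2)/\<delta> - 1 \<ge> (x0/4)/\<delta>" using r by (simp add: field_simps)
    then have "real n \<ge> x0 / (4*\<delta>)" using n1 by simp
    then have "B / real n \<le> B / (x0 / (4*\<delta>))" using B d x0 npos by (intro divide_left_mono) auto
    also have "\<dots> = 4 * B / x0 * \<delta>" using d x0 by (simp add: field_simps)
    finally show ?thesis .
  qed
  finally show ?thesis by (simp add: \<delta>_def)
qed

text \<open>Near \<open>0\<close>, \<open>Q x - C x\<close> is antitone and bounded above, hence converges.\<close>
lemma midpoint_convex_has_limit_at_right:
  fixes Q :: "real \<Rightarrow> real"
  assumes x0: "x0 > 0" and bd: "\<And>x. 0 < x \<Longrightarrow> x < x0 \<Longrightarrow> 0 \<le> Q x \<and> Q x \<le> B"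
    and mid: "\<And>x y. 0 < x \<Longrightarrow> x < y \<Longrightarrow> y < x0 \<Longrightarrow> 2 * Q ((x+y)/2) \<le> Q x + Q y"
  shows "\<exists>L. (Q \<longlongrightarrow> L) (at_right 0)"
proof -
  define C where "C = 4 * B / x0"
  define c where "c = x0 / 4"
  have B: "B \<ge> 0" using bd[of "x0/2"] x0 by auto
  have lip: "Q b - Q a \<le> C * (b - a)" if "0 < a" "a < b" "b \<le> c" for a b
    using midpoint_convex_increment_bound[OF x0 bd mid that(1,2)] that(3) by (simp add: C_def c_def)
  define W where "W x = Q x - C * x" for x
  have "\<exists>L. (W \<longlongrightarrow> L) (at_right 0)"
  proof (rule antimono_limit_at_right[where c=c and M=B])
    show "c > 0" using x0 by (simp add: c_def)
    fix a b :: real assume "0 < a" "a \<le> b" "b \<le> c"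
    then show "W b \<le> W a" using lip[of a b] by (cases "a = b") (auto simp: W_def algebra_simps)
  next
    fix x :: real assume "0 < x" "x \<le> c"
    moreover have "0 \<le> C * x" using B x0 \<open>0 < x\<close> by (simp add: C_def)
    ultimately show "W x \<le> B" using bd[of x] x0 by (auto simp: W_def c_def)
  qed
  then obtain L where "(W \<longlongrightarrow> L) (at_right 0)" by blast
  then have "((\<lambda>x. W x + C * x) \<longlongrightarrow> L + C * 0) (at_right 0)"
    by (intro tendsto_intros) (auto intro: tendsto_ident_at)
  then show ?thesis by (auto simp: W_def)
qed

section \<open>Holomorphic functions on a strip with bounded line norms\<close>

definition strip_L2 :: "real \<Rightarrow> real \<Rightarrow> (complex \<Rightarrow> complex) \<Rightarrow> bool" where
  "strip_L2 x0 B H \<longleftrightarrow> 0 \<le> B \<and> H holomorphic_on {z. 0 < Re z \<and> Re z < x0} \<and>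
     (\<forall>x. 0 < x \<longrightarrow> x < x0 \<longrightarrow> (\<integral>\<^sup>+y. ennreal ((cmod (H (Complex x y)))\<^sup>2) \<partial>lborel) \<le> ennreal B)"

lemma open_strip: "open {z::complex. a < Re z \<and> Re z < b}"
proof -
  have "{z::complex. a < Re z \<and> Re z < b} = {z. a < Re z} \<inter> {z. Re z < b}" by auto
  then show ?thesis
    by (simp add: open_Int open_Collect_less continuous_on_Re continuous_on_const)
qed

lemma strip_L2_continuous_on: "strip_L2 x0 B H \<Longrightarrow> continuous_on {z. 0 < Re z \<and> Re z < x0} H"
  by (simp add: strip_L2_def holomorphic_on_imp_continuous_on)

lemma strip_L2_line_measurable:
  assumes "strip_L2 x0 B H" "0 < x" "x < x0"
  shows "(\<lambda>y. H (Complex x y)) \<in> borel_measurable borel"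
  using continuous_on_vertical_line[OF strip_L2_continuous_on[OF assms(1)], of x] assms
  by (intro borel_measurable_continuous_onI) auto

lemma strip_L2_line_bound:
  assumes "strip_L2 x0 B H" "0 < x" "x < x0"
  shows "(\<integral>\<^sup>+y. ennreal ((cmod (H (Complex x y)))\<^sup>2) \<partial>lborel) \<le> ennreal B"
  using assms by (simp add: strip_L2_def)

lemma strip_L2_mono: "strip_L2 x0 B A \<Longrightarrow> B \<le> B' \<Longrightarrow> strip_L2 x0 B' A"
  unfolding strip_L2_def by (auto intro: order_trans ennreal_leI)

lemma strip_L2_cong:
  assumes "strip_L2 x0 B V" "\<And>z. 0 < Re z \<Longrightarrow> Re z < x0 \<Longrightarrow> U z = V z"
  shows "strip_L2 x0 B U"
proof -
  have "U holomorphic_on {z. 0 < Re z \<and> Re z < x0} \<longleftrightarrow> V holomorphic_on {z. 0 < Re z \<and> Re z < x0}"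
    using assms(2) by (intro holomorphic_cong) auto
  moreover have "U (Complex x y) = V (Complex x y)" if "0 < x" "x < x0" for x y using assms(2) that by simp
  ultimately show ?thesis using assms(1) unfolding strip_L2_def by simp
qed

lemma reflected_holomorphic_on_strip:
  assumes "G holomorphic_on {z. a < Re z \<and> Re z < b}"
  shows "(\<lambda>w. cnj (G (of_real \<sigma> - cnj w))) holomorphic_on {w. \<sigma> - b < Re w \<and> Re w < \<sigma> - a}"
proof -
  define \<Omega> where "\<Omega> = {w::complex. \<sigma> - b < Re w \<and> Re w < \<sigma> - a}"
  have "(\<lambda>u. of_real \<sigma> - u) holomorphic_on cnj ` \<Omega>" by (intro holomorphic_intros)
  moreover have "(\<lambda>u. of_real \<sigma> - u) ` (cnj ` \<Omega>) \<subseteq> {z. a < Re z \<and> Re z < b}"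
    by (auto simp: \<Omega>_def)
  ultimately have "(\<lambda>u. G (of_real \<sigma> - u)) holomorphic_on cnj ` \<Omega>"
    using holomorphic_on_compose_gen[of "\<lambda>u. of_real \<sigma> - u" "cnj ` \<Omega>" G] assms by (simp add: o_def)
  from holomorphic_on_compose_cnj_cnj[OF this] show ?thesis
    unfolding \<Omega>_def by (simp add: o_def open_strip)
qed

lemma nn_integral_half_line_reflect_le:
  fixes h :: "real \<Rightarrow> real"
  assumes h: "h \<in> borel_measurable borel" and nonneg: "\<And>y. 0 \<le> h y"
    and bound: "(\<integral>\<^sup>+y. ennreal (h y) \<partial>lborel) \<le> ennreal C"
  shows "(\<integral>\<^sup>+y. indicator {R0..} y * ennreal (h y + h (-y)) \<partial>lborel) \<le> ennreal (2 * C)"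
proof -
  have m: "(\<lambda>y. ennreal (h y)) \<in> borel_measurable borel" using h by simp
  have "(\<integral>\<^sup>+y. indicator {R0..} y * ennreal (h y + h (-y)) \<partial>lborel)
      \<le> (\<integral>\<^sup>+y. ennreal (h y) + ennreal (h (-y)) \<partial>lborel)"
    using nonneg by (intro nn_integral_mono) (auto split: split_indicator)
  also have "\<dots> = (\<integral>\<^sup>+y. ennreal (h y) \<partial>lborel) + (\<integral>\<^sup>+y. ennreal (h (-y)) \<partial>lborel)"
    using m by (intro nn_integral_add) (auto intro: measurable_compose[OF _ m])
  also have "\<dots> = 2 * (\<integral>\<^sup>+y. ennreal (h y) \<partial>lborel)"
    using nn_integral_reflect[OF m] by (simp add: mult_2)
  also have "\<dots> \<le> 2 * ennreal C" by (intro mult_left_mono bound) auto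
  also have "\<dots> \<le> ennreal (2 * C)" by (cases "C \<ge> 0") (auto simp: ennreal_mult ennreal_neg)
  finally show ?thesis .
qed

text \<open>Cauchy's theorem for \<open>H(w) conj (G (\<sigma> - conj w))\<close>, which is holomorphic, moves the pair of lines.\<close>
lemma strip_pairing_shift_less:
  assumes H: "strip_L2 x0 B H" and G: "strip_L2 x0 B G"
    and x: "0 < x" "x < x'" "x' < x0" and s: "0 < s'" "s < x0" and sum: "x + s = x' + s'"
  shows "(\<integral>y. H (Complex x y) * cnj (G (Complex s y)) \<partial>lborel) = (\<integral>y. H (Complex x' y) * cnj (G (Complex s' y)) \<partial>lborel)"
proof -
  define \<sigma> where "\<sigma> = x + s"
  define \<Omega> where "\<Omega> = {w::complex. max 0 (\<sigma> - x0) < Re w \<and> Re w < min x0 \<sigma>}"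
  have B: "B \<ge> 0" using H by (simp add: strip_L2_def)
  have inO: "w \<in> \<Omega>" if "x \<le> Re w" "Re w \<le> x'" for w
    using that x s sum by (auto simp: \<Omega>_def \<sigma>_def)
  define P where "P w = H w * cnj (G (of_real \<sigma> - cnj w))" for w
  have Pval: "P (Complex t y) = H (Complex t y) * cnj (G (Complex (\<sigma> - t) y))" for t y
  proof -
    have "of_real \<sigma> - cnj (Complex t y) = Complex (\<sigma> - t) y" by (simp add: complex_eq_iff)
    then show ?thesis by (simp add: P_def)
  qed
  have sub: "\<Omega> \<subseteq> {z. 0 < Re z \<and> Re z < x0}" "\<Omega> \<subseteq> {w. \<sigma> - x0 < Re w \<and> Re w < \<sigma> - 0}"
    by (auto simp: \<Omega>_def)
  have "H holomorphic_on \<Omega>"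
    using H by (simp add: strip_L2_def holomorphic_on_subset[OF _ sub(1)])
  moreover have "(\<lambda>w. cnj (G (of_real \<sigma> - cnj w))) holomorphic_on \<Omega>"
    using G by (simp add: strip_L2_def holomorphic_on_subset[OF reflected_holomorphic_on_strip sub(2)])
  ultimately have holP: "P holomorphic_on \<Omega>" unfolding P_def by (rule holomorphic_on_mult)
  have contP: "continuous_on \<Omega> P" using holP by (rule holomorphic_on_imp_continuous_on)
  have tpos: "0 < t" "t < x0" "0 < \<sigma> - t" "\<sigma> - t < x0" if "x \<le> t" "t \<le> x'" for t
    using that x s sum by (auto simp: \<sigma>_def)
  have line: "(\<lambda>y. H (Complex t y)) \<in> borel_measurable borel" "(\<lambda>y. G (Complex (\<sigma> - t) y)) \<in> borel_measurable borel"
    "(\<integral>\<^sup>+y. ennreal ((cmod (H (Complex t y)))\<^sup>2) \<partial>lborel) \<le> ennreal B"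
    "(\<integral>\<^sup>+y. ennreal ((cmod (G (Complex (\<sigma> - t) y)))\<^sup>2) \<partial>lborel) \<le> ennreal B"
    if "x \<le> t" "t \<le> x'" for t
    using tpos[OF that] strip_L2_line_measurable[OF H, of t] strip_L2_line_measurable[OF G, of "\<sigma> - t"]
      strip_L2_line_bound[OF H, of t] strip_L2_line_bound[OF G, of "\<sigma> - t"] by auto
  have intline: "integrable lborel (\<lambda>y. P (Complex t y))" if "x \<le> t" "t \<le> x'" for t
    unfolding Pval using line[OF that] B B by (rule integrable_mult_cnj_L2)
  have "\<i> * ((\<integral>y. P (Complex x' y) \<partial>lborel) - (\<integral>y. P (Complex x y) \<partial>lborel)) = 0"
  proof (rule vertical_lines_integral_difference[where ?R0.0=0])
    fix R :: real assume R: "R \<ge> 0" "R > 0"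
    define S where "S = cbox (Complex x (-R)) (Complex x' R)"
    have "S \<subseteq> \<Omega>" using inO by (auto simp: S_def in_cbox_complex_iff)
    moreover have "path_image (rectpath (Complex x (-R)) (Complex x' R)) \<subseteq> S"
      unfolding S_def using R x by (intro path_image_rectpath_subset_cbox) auto
    ultimately have "(P has_contour_integral 0) (rectpath (Complex x (-R)) (Complex x' R))"
      using R x by (intro Cauchy_theorem_convex_simple[of P S])
        (auto simp: S_def intro: holomorphic_on_subset[OF holP] path_image_rectpath_subset_cbox)
    then show "contour_integral (rectpath (Complex x (-R)) (Complex x' R)) P = 0"
      by (rule contour_integral_unique)
  next
    show "(\<integral>\<^sup>+y. indicator {0..} y * (\<integral>\<^sup>+t. indicator {x..x'} t * ennreal (cmod (P (Complex t y)) + cmod (P (Complex t (-y)))) \<partial>lborel) \<partial>lborel) < \<infinity>"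
    proof (rule nn_integral_strip_tail_finite[where C="2 * (2 * B)"])
      show "continuous_on {z. x \<le> Re z \<and> Re z \<le> x' \<and> 0 \<le> \<bar>Im z\<bar>} P"
        by (rule continuous_on_subset[OF contP]) (auto intro: inO)
      fix t assume "t \<in> {x..x'}"
      then have t: "x \<le> t" "t \<le> x'" by auto
      have "(\<integral>\<^sup>+y. ennreal (cmod (P (Complex t y))) \<partial>lborel)
          = (\<integral>\<^sup>+y. ennreal (cmod (H (Complex t y)) * cmod (G (Complex (\<sigma> - t) y))) \<partial>lborel)"
        by (simp add: Pval norm_mult)
      also have "\<dots> \<le> ennreal (B + B)"
        using line[OF t] B B by (rule nn_integral_norm_mult_le)
      also have "B + B = 2 * B" by simp
      finally have bound: "(\<integral>\<^sup>+y. ennreal (cmod (P (Complex t y))) \<partial>lborel) \<le> ennreal (2 * B)" .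
      have meas: "(\<lambda>y. cmod (P (Complex t y))) \<in> borel_measurable borel"
        using borel_measurable_integrable[OF intline[OF t]] by simp
      show "(\<integral>\<^sup>+y. indicator {0..} y * ennreal (cmod (P (Complex t y)) + cmod (P (Complex t (-y)))) \<partial>lborel)
          \<le> ennreal (2 * (2 * B))"
        by (rule nn_integral_half_line_reflect_le[OF meas _ bound]) simp
    qed (use x in auto)
  qed (use x in \<open>auto intro!: continuous_on_subset[OF contP] inO intline\<close>)
  moreover have "\<sigma> - x = s" "\<sigma> - x' = s'" using sum by (auto simp: \<sigma>_def)
  ultimately show ?thesis by (simp add: Pval)
qed

lemma strip_pairing_shift:
  assumes H: "strip_L2 x0 B H" and G: "strip_L2 x0 B G"
    and x: "0 < x" "x < x0" "0 < x'" "x' < x0" and s: "0 < s" "s < x0" "0 < s'" "s' < x0"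
    and sum: "x + s = x' + s'"
  shows "(\<integral>y. H (Complex x y) * cnj (G (Complex s y)) \<partial>lborel) = (\<integral>y. H (Complex x' y) * cnj (G (Complex s' y)) \<partial>lborel)"
proof -
  consider "x < x'" | "x = x'" | "x' < x" by linarith
  then show ?thesis
  proof cases
    case 1 then show ?thesis using strip_pairing_shift_less[OF H G] x s sum by auto
  next
    case 2 then show ?thesis using sum by simp
  next
    case 3 then show ?thesis using strip_pairing_shift_less[OF H G, of x' x s s'] x s sum by auto
  qed
qed

lemma strip_L2_line_sq_integrable:
  assumes "strip_L2 x0 B H" "0 < x" "x < x0"
  shows "integrable lborel (\<lambda>y. (cmod (H (Complex x y)))\<^sup>2)"
proof (rule integrableI_bounded)
  show "(\<lambda>y. (cmod (H (Complex x y)))\<^sup>2) \<in> borel_measurable lborel"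
    using strip_L2_line_measurable[OF assms] by auto
  have "(\<integral>\<^sup>+y. ennreal (norm ((cmod (H (Complex x y)))\<^sup>2)) \<partial>lborel) \<le> ennreal B"
    using strip_L2_line_bound[OF assms] by simp
  then show "(\<integral>\<^sup>+y. ennreal (norm ((cmod (H (Complex x y)))\<^sup>2)) \<partial>lborel) < \<infinity>"
    by (simp add: le_less_trans)
qed

lemma strip_L2_line_norm_bounds:
  assumes "strip_L2 x0 B H" "0 < x" "x < x0"
  shows "0 \<le> (\<integral>y. (cmod (H (Complex x y)))\<^sup>2 \<partial>lborel) \<and> (\<integral>y. (cmod (H (Complex x y)))\<^sup>2 \<partial>lborel) \<le> B"
proof
  show "0 \<le> (\<integral>y. (cmod (H (Complex x y)))\<^sup>2 \<partial>lborel)" by simp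
  have B: "B \<ge> 0" using assms by (simp add: strip_L2_def)
  have "ennreal (\<integral>y. (cmod (H (Complex x y)))\<^sup>2 \<partial>lborel) = (\<integral>\<^sup>+y. ennreal ((cmod (H (Complex x y)))\<^sup>2) \<partial>lborel)"
    using strip_L2_line_sq_integrable[OF assms] by (intro nn_integral_eq_integral[symmetric]) auto
  also have "\<dots> \<le> ennreal B" by (rule strip_L2_line_bound[OF assms])
  finally show "(\<integral>y. (cmod (H (Complex x y)))\<^sup>2 \<partial>lborel) \<le> B" using B by simp
qed

lemma cmod_diff_sq: "(cmod (a - b))\<^sup>2 = (cmod a)\<^sup>2 + (cmod b)\<^sup>2 - 2 * Re (a * cnj b)"
  unfolding cmod_power2 by (simp add: power2_eq_square algebra_simps)

lemma strip_L2_line_norm_has_limit: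
  assumes H: "strip_L2 x0 B H" and x0: "x0 > 0"
  shows "\<exists>L. ((\<lambda>x. \<integral>y. (cmod (H (Complex x y)))\<^sup>2 \<partial>lborel) \<longlongrightarrow> L) (at_right 0)"
proof (rule midpoint_convex_has_limit_at_right[OF x0])
  have B: "B \<ge> 0" using H by (simp add: strip_L2_def)
  define Q where "Q x = (\<integral>y. (cmod (H (Complex x y)))\<^sup>2 \<partial>lborel)" for x
  show "0 \<le> Q x \<and> Q x \<le> B" if "0 < x" "x < x0" for x
    using strip_L2_line_norm_bounds[OF H that] by (simp add: Q_def)
  fix x y assume xy: "0 < x" "x < y" "y < x0"
  define m where "m = (x + y) / 2"
  have m: "0 < m" "m < x0" "x < m" using xy by (auto simp: m_def)
  have ih: "integrable lborel (\<lambda>t. H (Complex x t) * cnj (H (Complex y t)))"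
    using xy by (intro integrable_mult_cnj_L2[where B=B and B'=B] strip_L2_line_measurable[OF H] strip_L2_line_bound[OF H] B) auto
  have "(\<integral>t. H (Complex x t) * cnj (H (Complex y t)) \<partial>lborel) = (\<integral>t. H (Complex m t) * cnj (H (Complex m t)) \<partial>lborel)"
    using xy m by (intro strip_pairing_shift[OF H H]) (auto simp: m_def)
  also have "\<dots> = (\<integral>t. complex_of_real ((cmod (H (Complex m t)))\<^sup>2) \<partial>lborel)"
    by (intro Bochner_Integration.integral_cong refl) (simp only: complex_norm_square)
  also have "\<dots> = of_real (Q m)" unfolding Q_def by (rule integral_complex_of_real)
  finally have e: "(\<integral>t. H (Complex x t) * cnj (H (Complex y t)) \<partial>lborel) = of_real (Q m)" .
  have "(\<integral>t. Re (H (Complex x t) * cnj (H (Complex y t))) \<partial>lborel) = Re (\<integral>t. H (Complex x t) * cnj (H (Complex y t)) \<partial>lborel)"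
    by (rule integral_bounded_linear[OF bounded_linear_Re ih])
  then have eRe: "(\<integral>t. Re (H (Complex x t) * cnj (H (Complex y t))) \<partial>lborel) = Q m" using e by simp
  have iRe: "integrable lborel (\<lambda>t. Re (H (Complex x t) * cnj (H (Complex y t))))"
    using ih by (rule integrable_Re)
  have ix: "integrable lborel (\<lambda>t. (cmod (H (Complex x t)))\<^sup>2)" using strip_L2_line_sq_integrable[OF H] xy by auto
  have iy: "integrable lborel (\<lambda>t. (cmod (H (Complex y t)))\<^sup>2)" using strip_L2_line_sq_integrable[OF H] xy by auto
  have "0 \<le> (\<integral>t. (cmod (H (Complex x t)))\<^sup>2 + (cmod (H (Complex y t)))\<^sup>2 - 2 * Re (H (Complex x t) * cnj (H (Complex y t))) \<partial>lborel)"
  proof (intro integral_nonneg_AE AE_I2)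
    fix t
    have "0 \<le> (cmod (H (Complex x t) - H (Complex y t)))\<^sup>2" by simp
    then show "0 \<le> (cmod (H (Complex x t)))\<^sup>2 + (cmod (H (Complex y t)))\<^sup>2 - 2 * Re (H (Complex x t) * cnj (H (Complex y t)))"
      by (simp only: cmod_diff_sq)
  qed
  also have "\<dots> = Q x + Q y - 2 * Q m"
  proof -
    define A where "A t = (cmod (H (Complex x t)))\<^sup>2" for t
    define B' where "B' t = (cmod (H (Complex y t)))\<^sup>2" for t
    define C where "C t = Re (H (Complex x t) * cnj (H (Complex y t)))" for t
    have "(\<integral>t. A t + B' t - 2 * C t \<partial>lborel) = (\<integral>t. A t + B' t \<partial>lborel) - (\<integral>t. 2 * C t \<partial>lborel)"
    proof (intro Bochner_Integration.integral_diff)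
      show "integrable lborel (\<lambda>t. A t + B' t)" using ix iy unfolding A_def B'_def by auto
      have "integrable lborel C" using iRe unfolding C_def .
      then show "integrable lborel (\<lambda>t. 2 * C t)" by (rule integrable_mult_right)
    qed
    also have "\<dots> = (\<integral>t. A t \<partial>lborel) + (\<integral>t. B' t \<partial>lborel) - 2 * (\<integral>t. C t \<partial>lborel)"
      using ix iy unfolding A_def B'_def by (simp add: Bochner_Integration.integral_add)
    finally show ?thesis using eRe unfolding A_def B'_def C_def Q_def by simp
  qed
  finally show "2 * Q ((x + y) / 2) \<le> Q x + Q y" by (simp add: m_def)
qed

lemma strip_L2_add_unimodular:
  assumes A: "strip_L2 x0 B A" and C: "strip_L2 x0 B C" and c: "cmod c = 1"
  shows "strip_L2 x0 (4 * B) (\<lambda>z. A z + c * C z)"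
  unfolding strip_L2_def
proof (intro conjI allI impI)
  have B: "B \<ge> 0" using A by (simp add: strip_L2_def)
  then show "0 \<le> 4 * B" by simp
  show "(\<lambda>z. A z + c * C z) holomorphic_on {z. 0 < Re z \<and> Re z < x0}"
    using A C by (auto simp: strip_L2_def intro!: holomorphic_intros)
  fix x :: real assume x: "0 < x" "x < x0"
  have pt: "(cmod (A (Complex x y) + c * C (Complex x y)))\<^sup>2 \<le> 2 * (cmod (A (Complex x y)))\<^sup>2 + 2 * (cmod (C (Complex x y)))\<^sup>2" for y
  proof -
    have "cmod (A (Complex x y) + c * C (Complex x y)) \<le> cmod (A (Complex x y)) + cmod (C (Complex x y))"
      using norm_triangle_ineq[of "A (Complex x y)" "c * C (Complex x y)"] c by (simp add: norm_mult)
    then have "(cmod (A (Complex x y) + c * C (Complex x y)))\<^sup>2 \<le> (cmod (A (Complex x y)) + cmod (C (Complex x y)))\<^sup>2"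
      by (intro power_mono) auto
    also have "\<dots> \<le> 2 * (cmod (A (Complex x y)))\<^sup>2 + 2 * (cmod (C (Complex x y)))\<^sup>2"
      using sum_squares_bound[of "cmod (A (Complex x y))" "cmod (C (Complex x y))"]
      by (simp add: power2_eq_square algebra_simps)
    finally show ?thesis .
  qed
  have mA: "(\<lambda>y. ennreal ((cmod (A (Complex x y)))\<^sup>2)) \<in> borel_measurable borel" using strip_L2_line_measurable[OF A x] by auto
  have mC: "(\<lambda>y. ennreal ((cmod (C (Complex x y)))\<^sup>2)) \<in> borel_measurable borel" using strip_L2_line_measurable[OF C x] by auto
  have "(\<integral>\<^sup>+y. ennreal ((cmod (A (Complex x y) + c * C (Complex x y)))\<^sup>2) \<partial>lborel)
      \<le> (\<integral>\<^sup>+y. ennreal 2 * ennreal ((cmod (A (Complex x y)))\<^sup>2) + ennreal 2 * ennreal ((cmod (C (Complex x y)))\<^sup>2) \<partial>lborel)"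
  proof (intro nn_integral_mono)
    fix y
    have "ennreal ((cmod (A (Complex x y) + c * C (Complex x y)))\<^sup>2) \<le> ennreal (2 * (cmod (A (Complex x y)))\<^sup>2 + 2 * (cmod (C (Complex x y)))\<^sup>2)"
      using pt by (rule ennreal_leI)
    also have "\<dots> = ennreal 2 * ennreal ((cmod (A (Complex x y)))\<^sup>2) + ennreal 2 * ennreal ((cmod (C (Complex x y)))\<^sup>2)"
      by (simp add: ennreal_plus ennreal_mult)
    finally show "ennreal ((cmod (A (Complex x y) + c * C (Complex x y)))\<^sup>2) \<le> ennreal 2 * ennreal ((cmod (A (Complex x y)))\<^sup>2) + ennreal 2 * ennreal ((cmod (C (Complex x y)))\<^sup>2)" .
  qed
  also have "\<dots> = ennreal 2 * (\<integral>\<^sup>+y. ennreal ((cmod (A (Complex x y)))\<^sup>2) \<partial>lborel) + ennreal 2 * (\<integral>\<^sup>+y. ennreal ((cmod (C (Complex x y)))\<^sup>2) \<partial>lborel)"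
    using mA mC by (simp add: nn_integral_add nn_integral_cmult)
  also have "\<dots> \<le> ennreal 2 * ennreal B + ennreal 2 * ennreal B"
    by (intro add_mono mult_left_mono strip_L2_line_bound[OF A x] strip_L2_line_bound[OF C x]) auto
  also have "\<dots> = ennreal (4 * B)"
    using B by (simp add: ennreal_mult[symmetric] ennreal_plus[symmetric] del: ennreal_plus ennreal_numeral)
  finally show "(\<integral>\<^sup>+y. ennreal ((cmod (A (Complex x y) + c * C (Complex x y)))\<^sup>2) \<partial>lborel) \<le> ennreal (4 * B)" .
qed

lemma integral_diff_divide_4:
  fixes f g :: "real \<Rightarrow> real"
  assumes "integrable lborel f" "integrable lborel g"
  shows "(\<integral>y. (f y - g y) / 4 \<partial>lborel) = ((\<integral>y. f y \<partial>lborel) - (\<integral>y. g y \<partial>lborel)) / 4"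
proof -
  have "(\<integral>y. (f y - g y) / 4 \<partial>lborel) = (\<integral>y. f y - g y \<partial>lborel) / 4" by (rule integral_divide_zero)
  also have "(\<integral>y. f y - g y \<partial>lborel) = (\<integral>y. f y \<partial>lborel) - (\<integral>y. g y \<partial>lborel)"
    by (rule Bochner_Integration.integral_diff[OF assms])
  finally show ?thesis .
qed

lemma Re_mult_cnj_polarization: "Re (a * cnj c) = ((cmod (a + c))\<^sup>2 - (cmod (a + (-1) * c))\<^sup>2) / 4"
  unfolding cmod_power2 by (simp add: power2_eq_square algebra_simps)

lemma Im_mult_cnj_polarization: "Im (a * cnj c) = ((cmod (a + \<i> * c))\<^sup>2 - (cmod (a + (-\<i>) * c))\<^sup>2) / 4"
  unfolding cmod_power2 by (simp add: power2_eq_square algebra_simps)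

lemma integral_mult_cnj_polarization:
  fixes a c :: "real \<Rightarrow> complex"
  assumes ac: "integrable lborel (\<lambda>y. a y * cnj (c y))"
    and sq: "\<And>u. cmod u = 1 \<Longrightarrow> integrable lborel (\<lambda>y. (cmod (a y + u * c y))\<^sup>2)"
  defines "Q \<equiv> \<lambda>u. \<integral>y. (cmod (a y + u * c y))\<^sup>2 \<partial>lborel"
  shows "(\<integral>y. a y * cnj (c y) \<partial>lborel) = Complex ((Q 1 - Q (-1)) / 4) ((Q \<i> - Q (-\<i>)) / 4)"
proof -
  have "Re (\<integral>y. a y * cnj (c y) \<partial>lborel) = (\<integral>y. Re (a y * cnj (c y)) \<partial>lborel)"
    by (rule integral_bounded_linear[OF bounded_linear_Re ac, symmetric])
  also have "\<dots> = (\<integral>y. ((cmod (a y + 1 * c y))\<^sup>2 - (cmod (a y + (-1) * c y))\<^sup>2) / 4 \<partial>lborel)"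
    by (simp only: Re_mult_cnj_polarization mult_1)
  also have "\<dots> = (Q 1 - Q (-1)) / 4"
    unfolding Q_def using sq[of 1] sq[of "-1"] by (intro integral_diff_divide_4) auto
  finally have re: "Re (\<integral>y. a y * cnj (c y) \<partial>lborel) = (Q 1 - Q (-1)) / 4" .
  have "Im (\<integral>y. a y * cnj (c y) \<partial>lborel) = (\<integral>y. Im (a y * cnj (c y)) \<partial>lborel)"
    by (rule integral_bounded_linear[OF bounded_linear_Im ac, symmetric])
  also have "\<dots> = (\<integral>y. ((cmod (a y + \<i> * c y))\<^sup>2 - (cmod (a y + (-\<i>) * c y))\<^sup>2) / 4 \<partial>lborel)"
    by (simp only: Im_mult_cnj_polarization)
  also have "\<dots> = (Q \<i> - Q (-\<i>)) / 4"
    unfolding Q_def using sq[of "\<i>"] sq[of "-\<i>"] by (intro integral_diff_divide_4) auto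
  finally have im: "Im (\<integral>y. a y * cnj (c y) \<partial>lborel) = (Q \<i> - Q (-\<i>)) / 4" .
  show ?thesis using re im by (simp add: complex_eq_iff)
qed

lemma strip_pairing_has_limit:
  assumes A: "strip_L2 x0 B A" and C: "strip_L2 x0 B C" and x0: "x0 > 0"
  shows "\<exists>L. ((\<lambda>x. \<integral>y. A (Complex x y) * cnj (C (Complex x y)) \<partial>lborel) \<longlongrightarrow> L) (at_right 0)"
proof -
  define Q where "Q u x = (\<integral>y. (cmod (A (Complex x y) + u * C (Complex x y)))\<^sup>2 \<partial>lborel)" for u x
  have "\<exists>L. (Q u \<longlongrightarrow> L) (at_right 0)" if "cmod u = 1" for u
    unfolding Q_def using strip_L2_line_norm_has_limit[OF strip_L2_add_unimodular[OF A C that] x0] .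
  then obtain L1 L2 L3 L4 where L: "(Q 1 \<longlongrightarrow> L1) (at_right 0)" "(Q (-1) \<longlongrightarrow> L2) (at_right 0)"
    "(Q \<i> \<longlongrightarrow> L3) (at_right 0)" "(Q (-\<i>) \<longlongrightarrow> L4) (at_right 0)"
    by (metis norm_one norm_minus_cancel norm_ii)
  have B: "B \<ge> 0" using A by (simp add: strip_L2_def)
  have "eventually (\<lambda>x. 0 < x \<and> x < x0) (at_right (0::real))"
    using x0 by (auto simp: eventually_at_right_field intro!: exI[of _ x0])
  then have "eventually (\<lambda>x. Complex ((Q 1 x - Q (-1) x) / 4) ((Q \<i> x - Q (-\<i>) x) / 4)
      = (\<integral>y. A (Complex x y) * cnj (C (Complex x y)) \<partial>lborel)) (at_right 0)"
  proof (rule eventually_mono)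
    fix x :: real assume x: "0 < x \<and> x < x0"
    then have "integrable lborel (\<lambda>y. A (Complex x y) * cnj (C (Complex x y)))"
      by (intro integrable_mult_cnj_L2[where B=B and B'=B] strip_L2_line_measurable[OF A]
          strip_L2_line_measurable[OF C] strip_L2_line_bound[OF A] strip_L2_line_bound[OF C] B) auto
    moreover have "integrable lborel (\<lambda>y. (cmod (A (Complex x y) + u * C (Complex x y)))\<^sup>2)" if "cmod u = 1" for u
      using x strip_L2_line_sq_integrable[OF strip_L2_add_unimodular[OF A C that]] by auto
    ultimately show "Complex ((Q 1 x - Q (-1) x) / 4) ((Q \<i> x - Q (-\<i>) x) / 4)
        = (\<integral>y. A (Complex x y) * cnj (C (Complex x y)) \<partial>lborel)"
      unfolding Q_def by (rule integral_mult_cnj_polarization[symmetric])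
  qed
  moreover have "((\<lambda>x. Complex ((Q 1 x - Q (-1) x) / 4) ((Q \<i> x - Q (-\<i>) x) / 4))
      \<longlongrightarrow> Complex ((L1 - L2) / 4) ((L3 - L4) / 4)) (at_right 0)"
    by (intro tendsto_Complex tendsto_intros L) auto
  ultimately show ?thesis by (blast intro: Lim_transform_eventually)
qed

section \<open>Cauchy's formula on a vertical line\<close>

lemma mult_le_weighted_sum_squares: "0 \<le> a \<Longrightarrow> 0 \<le> b \<Longrightarrow> 0 < e \<Longrightarrow> (a::real) * b \<le> e * a^2 + b^2 / e"
proof -
  assume a: "0 \<le> a" "0 \<le> b" "0 < e"
  have "0 \<le> (e * a - b)^2" by simp
  then have "2 * (e*a) * b \<le> (e*a)^2 + b^2" by (simp add: power2_diff)
  then have "(2*(e*a)*b)/e \<le> ((e*a)^2 + b^2)/e" using a by (intro divide_right_mono) auto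
  moreover have "(2*(e*a)*b)/e = 2*(a*b)" using a by simp
  moreover have "((e*a)^2 + b^2)/e = e*a^2 + b^2/e" using a by (simp add: power2_eq_square field_simps)
  moreover have "0 \<le> a*b" using a by simp
  ultimately show ?thesis by linarith
qed

lemma norm_inverse_line_sq:
  shows "(cmod (1 / (Complex t y - of_real \<alpha>)))\<^sup>2 = 1 / ((t - \<alpha>)\<^sup>2 + y\<^sup>2)"
proof -
  have "Complex t y - of_real \<alpha> = Complex (t - \<alpha>) y" by (simp add: complex_eq_iff)
  then show ?thesis by (simp add: norm_divide cmod_power2 power_divide)
qed

lemma nn_integral_norm_inverse_line_sq:
  assumes "t \<noteq> \<alpha>"
  shows "(\<integral>\<^sup>+y. ennreal ((cmod (1 / (Complex t y - of_real \<alpha>)))\<^sup>2) \<partial>lborel) = ennreal (pi / \<bar>t - \<alpha>\<bar>)"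
proof -
  have "(\<integral>\<^sup>+y. ennreal ((cmod (1 / (Complex t y - of_real \<alpha>)))\<^sup>2) \<partial>lborel) = (\<integral>\<^sup>+y. ennreal (1 / (\<bar>t - \<alpha>\<bar>\<^sup>2 + y\<^sup>2)) \<partial>lborel)"
    by (simp add: norm_inverse_line_sq)
  also have "\<dots> = ennreal (pi / \<bar>t - \<alpha>\<bar>)" using assms by (intro nn_integral_inverse_sq_plus_sq) auto
  finally show ?thesis .
qed

lemma inverse_line_measurable:
  assumes "t \<noteq> \<alpha>"
  shows "(\<lambda>y. 1 / (Complex t y - of_real \<alpha>)) \<in> borel_measurable borel"
proof (rule borel_measurable_continuous_onI)
  have "Complex t y - of_real \<alpha> \<noteq> 0" for y using assms by (simp add: complex_eq_iff)
  then show "continuous_on UNIV (\<lambda>y. 1 / (Complex t y - of_real \<alpha>))"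
    by (intro continuous_intros) auto
qed

lemma nn_integral_norm_mult_le_weighted:
  fixes h g :: "real \<Rightarrow> complex"
  assumes "h \<in> borel_measurable borel" "g \<in> borel_measurable borel"
    "(\<integral>\<^sup>+y. ennreal ((cmod (h y))\<^sup>2) \<partial>lborel) \<le> ennreal B"
    "(\<integral>\<^sup>+y. ennreal ((cmod (g y))\<^sup>2) \<partial>lborel) \<le> ennreal B'"
    "B \<ge> 0" "B' \<ge> 0" "e > 0"
  shows "(\<integral>\<^sup>+y. ennreal (cmod (h y) * cmod (g y)) \<partial>lborel) \<le> ennreal (e * B + B' / e)"
proof -
  have "(\<integral>\<^sup>+y. ennreal (cmod (h y) * cmod (g y)) \<partial>lborel)
        \<le> (\<integral>\<^sup>+y. ennreal e * ennreal ((cmod (h y))\<^sup>2) + ennreal (1/e) * ennreal ((cmod (g y))\<^sup>2) \<partial>lborel)"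
  proof (intro nn_integral_mono)
    fix y
    have "cmod (h y) * cmod (g y) \<le> e * (cmod (h y))\<^sup>2 + (1/e) * (cmod (g y))\<^sup>2"
      using mult_le_weighted_sum_squares[of "cmod (h y)" "cmod (g y)" e] assms(7) by simp
    then show "ennreal (cmod (h y) * cmod (g y)) \<le> ennreal e * ennreal ((cmod (h y))\<^sup>2) + ennreal (1/e) * ennreal ((cmod (g y))\<^sup>2)"
      using assms(7) by (simp add: ennreal_mult'[symmetric] ennreal_plus[symmetric] del: ennreal_plus)
  qed
  also have "\<dots> = ennreal e * (\<integral>\<^sup>+y. ennreal ((cmod (h y))\<^sup>2) \<partial>lborel) + ennreal (1/e) * (\<integral>\<^sup>+y. ennreal ((cmod (g y))\<^sup>2) \<partial>lborel)"
    using assms(1,2) by (simp add: nn_integral_add nn_integral_cmult)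
  also have "\<dots> \<le> ennreal e * ennreal B + ennreal (1/e) * ennreal B'"
    by (intro add_mono mult_left_mono assms(3,4)) auto
  also have "\<dots> = ennreal (e * B + B' / e)"
    using assms(5,6,7) by (simp add: ennreal_mult'[symmetric] ennreal_plus[symmetric] del: ennreal_plus)
  finally show ?thesis .
qed

lemma nn_integral_norm_div_vertical_line_le:
  fixes F :: "complex \<Rightarrow> complex"
  assumes hol: "F holomorphic_on {z. 0 < Re z}"
    and bd: "\<And>t. 0 < t \<Longrightarrow> (\<integral>\<^sup>+y. ennreal ((cmod (F (Complex t y)))\<^sup>2) \<partial>lborel) \<le> ennreal B"
    and B: "B \<ge> 0" and t: "0 < t" "t \<noteq> \<alpha>" and e: "e > 0"
  shows "(\<integral>\<^sup>+y. ennreal (cmod (F (Complex t y) / (Complex t y - of_real \<alpha>))) \<partial>lborel)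
           \<le> ennreal (e * B + (pi / \<bar>t - \<alpha>\<bar>) / e)"
proof -
  have "(\<lambda>y. F (Complex t y)) \<in> borel_measurable borel"
    using t by (intro vertical_line_measurable[OF holomorphic_on_imp_continuous_on[OF hol]]) auto
  then have "(\<integral>\<^sup>+y. ennreal (cmod (F (Complex t y)) * cmod (1 / (Complex t y - of_real \<alpha>))) \<partial>lborel)
      \<le> ennreal (e * B + (pi / \<bar>t - \<alpha>\<bar>) / e)"
    using t B e by (intro nn_integral_norm_mult_le_weighted inverse_line_measurable bd)
      (auto simp: nn_integral_norm_inverse_line_sq)
  then show ?thesis by (simp add: norm_divide)
qed

lemma integrable_div_vertical_line:
  fixes F :: "complex \<Rightarrow> complex"
  assumes hol: "F holomorphic_on {z. 0 < Re z}"
    and bd: "\<And>t. 0 < t \<Longrightarrow> (\<integral>\<^sup>+y. ennreal ((cmod (F (Complex t y)))\<^sup>2) \<partial>lborel) \<le> ennreal B"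
    and B: "B \<ge> 0" and t: "0 < t" "t \<noteq> \<alpha>"
  shows "integrable lborel (\<lambda>y. F (Complex t y) / (Complex t y - of_real \<alpha>))"
proof (rule integrableI_bounded)
  have "(\<lambda>y. F (Complex t y)) \<in> borel_measurable borel"
    using t by (intro vertical_line_measurable[OF holomorphic_on_imp_continuous_on[OF hol]]) auto
  then show "(\<lambda>y. F (Complex t y) / (Complex t y - of_real \<alpha>)) \<in> borel_measurable lborel"
    using inverse_line_measurable[OF t(2)] by (auto simp: divide_inverse intro!: borel_measurable_times)
  show "(\<integral>\<^sup>+y. ennreal (norm (F (Complex t y) / (Complex t y - of_real \<alpha>))) \<partial>lborel) < \<infinity>"
    using nn_integral_norm_div_vertical_line_le[OF hol bd B t, of 1] by (simp add: le_less_trans)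
qed

lemma norm_inverse_line_sq_le:
  assumes "1 \<le> \<bar>y\<bar>"
  shows "(cmod (1 / (Complex t y - of_real \<alpha>)))\<^sup>2 \<le> 2 / (1 + y\<^sup>2)"
proof -
  have "1 \<le> y\<^sup>2" using assms by (metis abs_le_square_iff abs_one one_power2)
  then have "1 + y\<^sup>2 \<le> 2 * ((t - \<alpha>)\<^sup>2 + y\<^sup>2)" by (smt (verit) zero_le_power2)
  then have "1 / ((t - \<alpha>)\<^sup>2 + y\<^sup>2) \<le> 2 / (1 + y\<^sup>2)"
    using \<open>1 \<le> y\<^sup>2\<close> by (simp add: field_simps add_pos_nonneg)
  then show ?thesis by (simp add: norm_inverse_line_sq)
qed

lemma nn_integral_div_vertical_line_tail_le:
  fixes F :: "complex \<Rightarrow> complex" and \<alpha> t :: real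
  assumes hol: "F holomorphic_on {z. 0 < Re z}"
    and bd: "\<And>t. 0 < t \<Longrightarrow> (\<integral>\<^sup>+y. ennreal ((cmod (F (Complex t y)))\<^sup>2) \<partial>lborel) \<le> ennreal B"
    and B: "B \<ge> 0" and tpos: "0 < t"
  defines "P \<equiv> \<lambda>w. F w / (w - of_real \<alpha>)"
  shows "(\<integral>\<^sup>+y. indicator {1..} y * ennreal (cmod (P (Complex t y)) + cmod (P (Complex t (-y)))) \<partial>lborel)
           \<le> ennreal (2*B + 4*pi)"
proof -
  have contF: "continuous_on {z. 0 < Re z} F" using hol by (rule holomorphic_on_imp_continuous_on)
  have pt: "cmod (P (Complex t z)) \<le> (cmod (F (Complex t z)))\<^sup>2 + 2 / (1 + z\<^sup>2)" if "1 \<le> \<bar>z\<bar>" for z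
  proof -
    have "cmod (P (Complex t z)) = cmod (F (Complex t z)) * cmod (1 / (Complex t z - of_real \<alpha>))"
      by (simp add: P_def norm_divide)
    then show ?thesis
      using mult_le_sum_squares[of "cmod (F (Complex t z))" "cmod (1 / (Complex t z - of_real \<alpha>))"]
        norm_inverse_line_sq_le[OF that, of t \<alpha>] by simp
  qed
  have pt_tail: "indicator {1..} y * ennreal (cmod (P (Complex t y)) + cmod (P (Complex t (-y))))
      \<le> ennreal ((cmod (F (Complex t y)))\<^sup>2) + ennreal ((cmod (F (Complex t (-y))))\<^sup>2) + ennreal 4 * ennreal (1 / (1\<^sup>2 + y\<^sup>2))" for y
  proof (cases "y \<ge> 1")
    case True
    then have "cmod (P (Complex t y)) + cmod (P (Complex t (-y)))
        \<le> (cmod (F (Complex t y)))\<^sup>2 + (cmod (F (Complex t (-y))))\<^sup>2 + 4 * (1 / (1\<^sup>2 + y\<^sup>2))"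
      using pt[of y] pt[of "-y"] by simp
    then show ?thesis using True
      by (simp add: ennreal_plus[symmetric] ennreal_mult[symmetric] ennreal_leI del: ennreal_plus ennreal_numeral)
  qed simp
  have m1: "(\<lambda>y. ennreal ((cmod (F (Complex t y)))\<^sup>2)) \<in> borel_measurable borel"
    using vertical_line_measurable[OF contF, of t] tpos by auto
  have m2: "(\<lambda>y. ennreal ((cmod (F (Complex t (-y))))\<^sup>2)) \<in> borel_measurable borel"
    using measurable_compose[OF _ m1, of uminus] by (auto simp: o_def)
  have "(\<integral>\<^sup>+y. indicator {1..} y * ennreal (cmod (P (Complex t y)) + cmod (P (Complex t (-y)))) \<partial>lborel)
      \<le> (\<integral>\<^sup>+y. ennreal ((cmod (F (Complex t y)))\<^sup>2) + ennreal ((cmod (F (Complex t (-y))))\<^sup>2) + ennreal 4 * ennreal (1 / (1\<^sup>2 + y\<^sup>2)) \<partial>lborel)"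
    by (intro nn_integral_mono pt_tail)
  also have "\<dots> = (\<integral>\<^sup>+y. ennreal ((cmod (F (Complex t y)))\<^sup>2) \<partial>lborel) + (\<integral>\<^sup>+y. ennreal ((cmod (F (Complex t (-y))))\<^sup>2) \<partial>lborel)
           + ennreal 4 * (\<integral>\<^sup>+y. ennreal (1 / (1\<^sup>2 + y\<^sup>2)) \<partial>lborel)"
    using m1 m2 by (simp add: nn_integral_add nn_integral_cmult)
  also have "\<dots> = 2 * (\<integral>\<^sup>+y. ennreal ((cmod (F (Complex t y)))\<^sup>2) \<partial>lborel) + ennreal 4 * ennreal pi"
    using nn_integral_reflect[OF m1] nn_integral_inverse_sq_plus_sq[of 1] by (simp add: mult_2)
  also have "\<dots> \<le> 2 * ennreal B + ennreal 4 * ennreal pi"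
    by (intro add_mono mult_left_mono bd tpos) auto
  also have "\<dots> = ennreal (2*B + 4*pi)" using B by (simp add: ennreal_plus ennreal_mult)
  finally show ?thesis .
qed

text \<open>Shifting the line of integration across the pole at \<open>\<alpha>\<close> picks up its residue.\<close>
lemma cauchy_formula_vertical_lines_difference:
  fixes F :: "complex \<Rightarrow> complex"
  assumes hol: "F holomorphic_on {z. 0 < Re z}"
    and bd: "\<And>t. 0 < t \<Longrightarrow> (\<integral>\<^sup>+y. ennreal ((cmod (F (Complex t y)))\<^sup>2) \<partial>lborel) \<le> ennreal B"
    and B: "B \<ge> 0" and x: "0 < x" "x < \<alpha>" "\<alpha> < X"
  shows "(\<integral>y. F (Complex X y) / (Complex X y - of_real \<alpha>) \<partial>lborel)
           - (\<integral>y. F (Complex x y) / (Complex x y - of_real \<alpha>) \<partial>lborel) = 2 * pi * F (of_real \<alpha>)"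
proof -
  define P where "P w = F w / (w - of_real \<alpha>)" for w
  have contF: "continuous_on {z. 0 < Re z} F" using hol by (rule holomorphic_on_imp_continuous_on)
  have contP: "continuous_on ({z. 0 < Re z} - {of_real \<alpha>}) P"
    unfolding P_def by (intro continuous_intros continuous_on_subset[OF contF]) auto
  have "\<i> * ((\<integral>y. P (Complex X y) \<partial>lborel) - (\<integral>y. P (Complex x y) \<partial>lborel)) = 2 * pi * \<i> * F (of_real \<alpha>)"
  proof (rule vertical_lines_integral_difference[where ?R0.0=1])
    fix R :: real assume R: "R \<ge> 1" "R > 0"
    define S where "S = cbox (Complex x (-R)) (Complex X R)"
    have inbox: "of_real \<alpha> \<in> box (Complex x (-R)) (Complex X R)"
      using x R by (auto simp: in_box_complex_iff)
    have Ssub: "S \<subseteq> {z. 0 < Re z}" using x by (auto simp: S_def in_cbox_complex_iff)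
    have pim: "path_image (rectpath (Complex x (-R)) (Complex X R)) \<subseteq> S - {of_real \<alpha>}"
      using inbox x R by (subst path_image_rectpath_cbox_minus_box) (auto simp: S_def)
    have "((\<lambda>w. F w / (w - of_real \<alpha>)) has_contour_integral
           (2*pi * \<i> * winding_number (rectpath (Complex x (-R)) (Complex X R)) (of_real \<alpha>) * F (of_real \<alpha>)))
           (rectpath (Complex x (-R)) (Complex X R))"
      using inbox pim holomorphic_on_subset[OF hol Ssub]
      by (intro Cauchy_integral_formula_convex_simple[of S]) (auto simp: S_def)
    then show "contour_integral (rectpath (Complex x (-R)) (Complex X R)) P = 2 * pi * \<i> * F (of_real \<alpha>)"
      using winding_number_rectpath[OF inbox] unfolding P_def by (auto intro: contour_integral_unique)
  next
    show "continuous_on {z. Re z = x \<or> Re z = X \<or> (x \<le> Re z \<and> Re z \<le> X \<and> 1 \<le> \<bar>Im z\<bar>)} P"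
      using x by (intro continuous_on_subset[OF contP]) (auto simp: complex_eq_iff)
    show "integrable lborel (\<lambda>y. P (Complex x y))" "integrable lborel (\<lambda>y. P (Complex X y))"
      using x unfolding P_def by (auto intro!: integrable_div_vertical_line[OF hol bd B])
  next
    show "(\<integral>\<^sup>+y. indicator {1..} y * (\<integral>\<^sup>+t. indicator {x..X} t * ennreal (cmod (P (Complex t y)) + cmod (P (Complex t (-y)))) \<partial>lborel) \<partial>lborel) < \<infinity>"
    proof (rule nn_integral_strip_tail_finite[where C="2*B + 4*pi"])
      show "continuous_on {z. x \<le> Re z \<and> Re z \<le> X \<and> 1 \<le> \<bar>Im z\<bar>} P"
        using x by (intro continuous_on_subset[OF contP]) (auto simp: complex_eq_iff)
      fix t assume "t \<in> {x..X}"
      then show "(\<integral>\<^sup>+y. indicator {1..} y * ennreal (cmod (P (Complex t y)) + cmod (P (Complex t (-y)))) \<partial>lborel)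
          \<le> ennreal (2*B + 4*pi)"
        using x unfolding P_def by (intro nn_integral_div_vertical_line_tail_le[OF hol bd B]) auto
    qed (use x in auto)
  qed (use x in auto)
  then show ?thesis
    unfolding P_def by (metis (no_types, lifting) complex_i_not_zero mult.assoc mult.left_commute mult_cancel_left)
qed

text \<open>The integral over a far line \<open>Re z = X\<close> is \<open>O(e B + 1/(e (X - \<alpha>)))\<close> for every \<open>e > 0\<close>, hence tends to zero.\<close>
lemma cauchy_formula_vertical_line:
  fixes F :: "complex \<Rightarrow> complex" and \<alpha> x B :: real
  assumes hol: "F holomorphic_on {z. 0 < Re z}"
    and bd: "\<And>t. 0 < t \<Longrightarrow> (\<integral>\<^sup>+y. ennreal ((cmod (F (Complex t y)))\<^sup>2) \<partial>lborel) \<le> ennreal B"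
    and B: "B \<ge> 0" and x: "0 < x" "x < \<alpha>"
  shows "(\<integral>y. F (Complex x y) / (Complex x y - of_real \<alpha>) \<partial>lborel) = - (2 * pi) * F (of_real \<alpha>)"
proof (rule ccontr)
  define d where "d = cmod ((\<integral>y. F (Complex x y) / (Complex x y - of_real \<alpha>) \<partial>lborel) + 2 * pi * F (of_real \<alpha>))"
  assume "\<not> ?thesis"
  then have d: "d > 0" by (simp add: d_def eq_neg_iff_add_eq_0)
  define e where "e = d / (2 * (B + 1))"
  have e: "e > 0" using d B by (simp add: e_def)
  have eB: "e * B < d / 2" using d B by (simp add: e_def field_simps)
  define X where "X = \<alpha> + 2 * pi / (e * d) + 1"
  have X: "X > \<alpha>" using e d by (simp add: X_def add_pos_pos)
  have X2: "(pi / \<bar>X - \<alpha>\<bar>) / e < d / 2"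
  proof -
    have "X - \<alpha> > 2 * pi / (e * d)" by (simp add: X_def)
    moreover have "0 < 2 * pi / (e * d)" using e d by simp
    ultimately have "pi / (X - \<alpha>) < pi / (2 * pi / (e * d))"
      by (intro divide_strict_left_mono mult_pos_pos) auto
    also have "\<dots> = e * d / 2" by simp
    finally show ?thesis using X e by (simp add: field_simps)
  qed
  have "ennreal (norm (\<integral>y. F (Complex X y) / (Complex X y - of_real \<alpha>) \<partial>lborel))
      \<le> (\<integral>\<^sup>+y. ennreal (norm (F (Complex X y) / (Complex X y - of_real \<alpha>))) \<partial>lborel)"
    using X x by (intro integral_norm_bound_ennreal integrable_div_vertical_line[OF hol bd B]) auto
  also have "\<dots> \<le> ennreal (e * B + (pi / \<bar>X - \<alpha>\<bar>) / e)"
    using X x e by (intro nn_integral_norm_div_vertical_line_le[OF hol bd B]) auto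
  finally have "norm (\<integral>y. F (Complex X y) / (Complex X y - of_real \<alpha>) \<partial>lborel) \<le> e * B + (pi / \<bar>X - \<alpha>\<bar>) / e"
    using e B by (subst (asm) ennreal_le_iff) (auto intro!: add_nonneg_nonneg)
  also have "\<dots> < d" using eB X2 by linarith
  finally show False
    using cauchy_formula_vertical_lines_difference[OF hol bd B x X] by (simp add: d_def algebra_simps)
qed

lemma lborel_integral_odd_eq_0:
  fixes h :: "real \<Rightarrow> real"
  assumes "\<And>y. h (-y) = - h y"
  shows "(\<integral>y. h y \<partial>lborel) = 0"
proof -
  have "(\<integral>y. h y \<partial>lborel) = \<bar>-1\<bar> *\<^sub>R (\<integral>y. h (0 + (-1) * y) \<partial>lborel)"
    by (rule lborel_integral_real_affine) simp
  also have "\<dots> = (\<integral>y. - h y \<partial>lborel)" using assms by simp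
  also have "\<dots> = - (\<integral>y. h y \<partial>lborel)" by simp
  finally show ?thesis by simp
qed

lemma integral_poisson_kernel_neg:
  fixes a :: real assumes "a < 0"
  shows "(\<integral>y. a / (a^2 + y^2) \<partial>lborel) = - pi"
proof -
  have "(\<integral>y. a / (a^2 + y^2) \<partial>lborel) = (\<integral>y. - ((-a) / ((-a)^2 + y^2)) \<partial>lborel)" by simp
  also have "\<dots> = - (\<integral>y. (-a) / ((-a)^2 + y^2) \<partial>lborel)" by (rule integral_minus)
  also have "\<dots> = - pi" using assms integral_poisson_kernel[of "-a"] by simp
  finally show ?thesis .
qed

lemma integrable_const_div_sq_plus_sq:
  fixes a k :: real assumes "a \<noteq> 0"
  shows "integrable lborel (\<lambda>y. k / (a^2 + y^2))"
  using integrable_mult_right[OF integrable_inverse_sq_plus_sq[OF assms], of k] by simp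

lemma abs_div_sq_plus_sq_le:
  fixes b y :: real assumes "b \<noteq> 0"
  shows "\<bar>y\<bar> / (b^2 + y^2) \<le> 1 / (2 * \<bar>b\<bar>)"
proof -
  have "0 \<le> (\<bar>b\<bar> - \<bar>y\<bar>)^2" by simp
  then have "2 * \<bar>b\<bar> * \<bar>y\<bar> \<le> b^2 + y^2" by (simp add: power2_diff)
  moreover have "0 < b^2 + y^2" using assms by (simp add: add_pos_nonneg)
  ultimately show ?thesis using assms by (simp add: field_simps)
qed

text \<open>The imaginary parts of the two kernels cancel to order \<open>1/y\<^sup>2\<close>.\<close>
lemma abs_kernel_difference_le:
  fixes a b y :: real assumes a: "a \<noteq> 0" and b: "b \<noteq> 0"
  shows "\<bar>- y / (a^2 + y^2) + y / (b^2 + y^2)\<bar> \<le> (\<bar>a^2 - b^2\<bar> / (2 * \<bar>b\<bar>)) / (a^2 + y^2)"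
proof -
  have pa: "0 < a^2 + y^2" using a by (simp add: add_pos_nonneg)
  have pb: "0 < b^2 + y^2" using b by (simp add: add_pos_nonneg)
  have gen: "\<And>A B. A \<noteq> 0 \<Longrightarrow> B \<noteq> 0 \<Longrightarrow> - y / A + y / B = (y / B) * ((A - B) / A)"
    by (simp add: field_simps)
  have "- y / (a^2 + y^2) + y / (b^2 + y^2) = (y / (b^2 + y^2)) * (((a^2 + y^2) - (b^2 + y^2)) / (a^2 + y^2))"
    using pa pb by (intro gen) auto
  then have "- y / (a^2 + y^2) + y / (b^2 + y^2) = (y / (b^2 + y^2)) * ((a^2 - b^2) / (a^2 + y^2))"
    by simp
  then have "\<bar>- y / (a^2 + y^2) + y / (b^2 + y^2)\<bar> = (\<bar>y\<bar> / (b^2 + y^2)) * (\<bar>a^2 - b^2\<bar> / (a^2 + y^2))"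
    using pa pb by (simp add: abs_mult abs_divide)
  also have "\<dots> \<le> (1 / (2 * \<bar>b\<bar>)) * (\<bar>a^2 - b^2\<bar> / (a^2 + y^2))"
    using abs_div_sq_plus_sq_le[of b y] b pa by (intro mult_right_mono) auto
  finally show ?thesis by simp
qed

lemma norm_kernel_sum_le:
  fixes a b y :: real assumes a: "a \<noteq> 0" and b: "b \<noteq> 0"
  shows "cmod (1 / Complex a y + cnj (1 / Complex b y))
           \<le> (\<bar>a\<bar> + \<bar>a^2 - b^2\<bar> / (2 * \<bar>b\<bar>)) / (a^2 + y^2) + \<bar>b\<bar> / (b^2 + y^2)"
proof -
  define w where "w = 1 / Complex a y + cnj (1 / Complex b y)"
  have pa: "0 < a^2 + y^2" using a by (simp add: add_pos_nonneg)
  have pb: "0 < b^2 + y^2" using b by (simp add: add_pos_nonneg)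
  have "Re w = a / (a^2 + y^2) + b / (b^2 + y^2)" unfolding w_def by (simp add: Re_divide power2_eq_square)
  then have "\<bar>Re w\<bar> \<le> \<bar>a / (a^2 + y^2)\<bar> + \<bar>b / (b^2 + y^2)\<bar>" by (simp only: abs_triangle_ineq)
  also have "\<dots> = \<bar>a\<bar> / (a^2 + y^2) + \<bar>b\<bar> / (b^2 + y^2)" using pa pb by (simp add: abs_divide)
  finally have "\<bar>Re w\<bar> \<le> \<bar>a\<bar> / (a^2 + y^2) + \<bar>b\<bar> / (b^2 + y^2)" .
  moreover have "\<bar>Im w\<bar> \<le> (\<bar>a^2 - b^2\<bar> / (2 * \<bar>b\<bar>)) / (a^2 + y^2)"
    using abs_kernel_difference_le[OF a b, of y] unfolding w_def by (simp add: Im_divide power2_eq_square)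
  ultimately have "cmod w \<le> \<bar>a\<bar> / (a^2 + y^2) + \<bar>b\<bar> / (b^2 + y^2) + (\<bar>a^2 - b^2\<bar> / (2 * \<bar>b\<bar>)) / (a^2 + y^2)"
    using cmod_le[of w] by linarith
  then show ?thesis by (simp add: w_def add_divide_distrib)
qed

text \<open>The real parts are Poisson kernels, each of mass \<open>-\<pi>\<close>; the imaginary part is odd in \<open>y\<close>.\<close>
lemma kernel_sum_vertical_line:
  fixes x \<alpha> \<beta> :: real
  assumes "x < \<alpha>" "x < \<beta>"
  defines "f \<equiv> \<lambda>y. 1 / (Complex x y - of_real \<alpha>) + cnj (1 / (Complex x y - of_real \<beta>))"
  shows "integrable lborel f" "(\<integral>y. f y \<partial>lborel) = - 2 * pi"
proof -
  define a where "a = x - \<alpha>"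
  define b where "b = x - \<beta>"
  have a: "a < 0" and b: "b < 0" using assms by (auto simp: a_def b_def)
  have za: "Complex x y - of_real \<alpha> = Complex a y" for y by (simp add: a_def complex_eq_iff)
  have zb: "Complex x y - of_real \<beta> = Complex b y" for y by (simp add: b_def complex_eq_iff)
  have Ref: "Re (f y) = a / (a^2 + y^2) + b / (b^2 + y^2)" for y
    by (simp add: f_def za zb Re_divide power2_eq_square)
  have Imf: "Im (f y) = - y / (a^2 + y^2) + y / (b^2 + y^2)" for y
    by (simp add: f_def za zb Im_divide power2_eq_square)
  define K where "K = \<bar>a\<bar> + \<bar>a^2 - b^2\<bar> / (2 * \<bar>b\<bar>)"
  define L where "L = \<bar>b\<bar>"
  have bound: "norm (f y) \<le> K / (a^2 + y^2) + L / (b^2 + y^2)" for y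
    using norm_kernel_sum_le[of a b y] a b by (simp add: f_def za zb K_def L_def)
  have mf: "f \<in> borel_measurable borel"
  proof (rule borel_measurable_continuous_onI)
    have "Complex x y - of_real \<alpha> \<noteq> 0" "Complex x y - of_real \<beta> \<noteq> 0" for y
      using assms by (auto simp: complex_eq_iff)
    then show "continuous_on UNIV f" unfolding f_def by (intro continuous_intros) auto
  qed
  show intf: "integrable lborel f"
  proof (rule Bochner_Integration.integrable_bound)
    show "integrable lborel (\<lambda>y. K / (a^2 + y^2) + L / (b^2 + y^2))"
      using a b by (intro Bochner_Integration.integrable_add integrable_const_div_sq_plus_sq) auto
    show "f \<in> borel_measurable lborel" using mf by simp
    show "AE y in lborel. norm (f y) \<le> norm (K / (a^2 + y^2) + L / (b^2 + y^2))"
      using bound by (intro AE_I2) (rule order_trans[OF bound], simp)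
  qed
  have "Re (\<integral>y. f y \<partial>lborel) = (\<integral>y. Re (f y) \<partial>lborel)"
    by (rule integral_bounded_linear[OF bounded_linear_Re intf, symmetric])
  also have "\<dots> = (\<integral>y. a / (a^2 + y^2) \<partial>lborel) + (\<integral>y. b / (b^2 + y^2) \<partial>lborel)"
    unfolding Ref using a b by (intro Bochner_Integration.integral_add integrable_const_div_sq_plus_sq) auto
  also have "\<dots> = - 2 * pi" using integral_poisson_kernel_neg[OF a] integral_poisson_kernel_neg[OF b] by simp
  finally have r: "Re (\<integral>y. f y \<partial>lborel) = - 2 * pi" .
  have "Im (\<integral>y. f y \<partial>lborel) = (\<integral>y. Im (f y) \<partial>lborel)"
    by (rule integral_bounded_linear[OF bounded_linear_Im intf, symmetric])
  also have "\<dots> = 0" by (rule lborel_integral_odd_eq_0) (simp add: Imf)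
  finally have i: "Im (\<integral>y. f y \<partial>lborel) = 0" .
  show "(\<integral>y. f y \<partial>lborel) = - 2 * pi" using r i by (simp add: complex_eq_iff)
qed

lemma norm_diff_mult_sq_le:
  fixes a b g :: complex
  shows "(cmod ((a - b) * g))\<^sup>2 \<le> 2 * (cmod a)\<^sup>2 * (cmod g)\<^sup>2 + 2 * (cmod b)\<^sup>2 * (cmod g)\<^sup>2"
proof -
  have "(cmod (a - b))\<^sup>2 \<le> (cmod a + cmod b)\<^sup>2"
    using norm_triangle_ineq4[of a b] by (intro power_mono) auto
  also have "\<dots> \<le> 2 * (cmod a)\<^sup>2 + 2 * (cmod b)\<^sup>2"
    using sum_squares_bound[of "cmod a" "cmod b"] by (simp add: power2_eq_square algebra_simps)
  finally have le: "(cmod (a - b))\<^sup>2 \<le> 2 * (cmod a)\<^sup>2 + 2 * (cmod b)\<^sup>2" .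
  have "(cmod ((a - b) * g))\<^sup>2 = (cmod (a - b))\<^sup>2 * (cmod g)\<^sup>2" by (simp only: norm_mult power_mult_distrib)
  also have "\<dots> \<le> (2 * (cmod a)\<^sup>2 + 2 * (cmod b)\<^sup>2) * (cmod g)\<^sup>2" using le by (rule mult_right_mono) simp
  also have "\<dots> = 2 * (cmod a)\<^sup>2 * (cmod g)\<^sup>2 + 2 * (cmod b)\<^sup>2 * (cmod g)\<^sup>2" by (simp add: algebra_simps)
  finally show ?thesis .
qed

lemma norm_inverse_line_sq_le_gap:
  assumes "t < x0" "x0 < \<alpha>"
  shows "(cmod (1 / (Complex t y - of_real \<alpha>)))\<^sup>2 \<le> 1 / (\<alpha> - x0)\<^sup>2"
proof -
  have "(\<alpha> - x0)\<^sup>2 \<le> (\<alpha> - t)\<^sup>2" using assms by (intro power_mono) auto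
  then have "(\<alpha> - x0)\<^sup>2 \<le> (t - \<alpha>)\<^sup>2 + y\<^sup>2" by (simp add: power2_commute add_increasing2)
  moreover have "0 < (\<alpha> - x0)\<^sup>2" using assms by simp
  ultimately have "1 / ((t - \<alpha>)\<^sup>2 + y\<^sup>2) \<le> 1 / (\<alpha> - x0)\<^sup>2"
    by (intro divide_left_mono mult_pos_pos) linarith+
  then show ?thesis by (simp add: norm_inverse_line_sq)
qed

lemma difference_quotient_strip_L2:
  fixes F :: "complex \<Rightarrow> complex"
  assumes hol: "F holomorphic_on {z. 0 < Re z}"
    and bd: "\<And>t. 0 < t \<Longrightarrow> (\<integral>\<^sup>+y. ennreal ((cmod (F (Complex t y)))\<^sup>2) \<partial>lborel) \<le> ennreal B"
    and B: "B \<ge> 0" and x0: "0 < x0" "x0 < \<alpha>"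
  shows "strip_L2 x0 (2 * B / (\<alpha> - x0)\<^sup>2 + 2 * (cmod (F (of_real \<alpha>)))\<^sup>2 * (pi / (\<alpha> - x0)))
           (\<lambda>z. (F z - F (of_real \<alpha>)) / (z - of_real \<alpha>))"
  unfolding strip_L2_def
proof (intro conjI allI impI)
  define M where "M = 1 / (\<alpha> - x0)\<^sup>2"
  define c where "c = (cmod (F (of_real \<alpha>)))\<^sup>2"
  show "0 \<le> 2 * B / (\<alpha> - x0)\<^sup>2 + 2 * (cmod (F (of_real \<alpha>)))\<^sup>2 * (pi / (\<alpha> - x0))"
    using B x0 by (intro add_nonneg_nonneg) auto
  have ne: "z - of_real \<alpha> \<noteq> 0" if "Re z < x0" for z using that x0 by auto
  show "(\<lambda>z. (F z - F (of_real \<alpha>)) / (z - of_real \<alpha>)) holomorphic_on {z. 0 < Re z \<and> Re z < x0}"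
    using ne by (intro holomorphic_intros holomorphic_on_subset[OF hol]) auto
  fix t :: real assume t: "0 < t" "t < x0"
  define g where "g y = 1 / (Complex t y - of_real \<alpha>)" for y
  have pt: "(cmod ((F (Complex t y) - F (of_real \<alpha>)) / (Complex t y - of_real \<alpha>)))\<^sup>2
      \<le> 2 * M * (cmod (F (Complex t y)))\<^sup>2 + 2 * c * (cmod (g y))\<^sup>2" for y
  proof -
    have "(cmod (F (Complex t y)))\<^sup>2 * (cmod (g y))\<^sup>2 \<le> (cmod (F (Complex t y)))\<^sup>2 * M"
      using norm_inverse_line_sq_le_gap[OF t(2) x0(2)] by (intro mult_left_mono) (auto simp: g_def M_def)
    then show ?thesis
      using norm_diff_mult_sq_le[of "F (Complex t y)" "F (of_real \<alpha>)" "g y"]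
      by (simp add: g_def c_def divide_inverse algebra_simps)
  qed
  have mF: "(\<lambda>y. F (Complex t y)) \<in> borel_measurable borel"
    using t by (intro vertical_line_measurable[OF holomorphic_on_imp_continuous_on[OF hol]]) auto
  have mg: "(\<lambda>y. ennreal ((cmod (g y))\<^sup>2)) \<in> borel_measurable borel"
    using inverse_line_measurable[of t \<alpha>] t x0 by (auto simp: g_def[abs_def])
  have Mp: "M \<ge> 0" "c \<ge> 0" by (auto simp: M_def c_def)
  have "(\<integral>\<^sup>+y. ennreal ((cmod ((F (Complex t y) - F (of_real \<alpha>)) / (Complex t y - of_real \<alpha>)))\<^sup>2) \<partial>lborel)
      \<le> (\<integral>\<^sup>+y. ennreal (2 * M) * ennreal ((cmod (F (Complex t y)))\<^sup>2) + ennreal (2 * c) * ennreal ((cmod (g y))\<^sup>2) \<partial>lborel)"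
    using pt Mp by (intro nn_integral_mono) (simp add: ennreal_mult[symmetric] ennreal_plus[symmetric] ennreal_leI del: ennreal_plus)
  also have "\<dots> = ennreal (2 * M) * (\<integral>\<^sup>+y. ennreal ((cmod (F (Complex t y)))\<^sup>2) \<partial>lborel) + ennreal (2 * c) * (\<integral>\<^sup>+y. ennreal ((cmod (g y))\<^sup>2) \<partial>lborel)"
    using mF mg by (simp add: nn_integral_add nn_integral_cmult)
  also have "(\<integral>\<^sup>+y. ennreal ((cmod (g y))\<^sup>2) \<partial>lborel) = ennreal (pi / \<bar>t - \<alpha>\<bar>)"
    unfolding g_def using t x0 by (intro nn_integral_norm_inverse_line_sq) auto
  also have "ennreal (2 * M) * (\<integral>\<^sup>+y. ennreal ((cmod (F (Complex t y)))\<^sup>2) \<partial>lborel) + ennreal (2 * c) * ennreal (pi / \<bar>t - \<alpha>\<bar>)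
      \<le> ennreal (2 * M) * ennreal B + ennreal (2 * c) * ennreal (pi / (\<alpha> - x0))"
  proof (intro add_mono mult_left_mono bd t(1) ennreal_leI)
    have "\<bar>t - \<alpha>\<bar> \<ge> \<alpha> - x0" using t x0 by auto
    then show "pi / \<bar>t - \<alpha>\<bar> \<le> pi / (\<alpha> - x0)" using x0 by (intro divide_left_mono) auto
  qed auto
  also have "\<dots> = ennreal (2 * B / (\<alpha> - x0)\<^sup>2 + 2 * (cmod (F (of_real \<alpha>)))\<^sup>2 * (pi / (\<alpha> - x0)))"
    using Mp B x0 by (simp add: ennreal_mult[symmetric] ennreal_plus[symmetric] M_def c_def del: ennreal_plus)
  finally show "(\<integral>\<^sup>+y. ennreal ((cmod ((F (Complex t y) - F (of_real \<alpha>)) / (Complex t y - of_real \<alpha>)))\<^sup>2) \<partial>lborel)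
      \<le> ennreal (2 * B / (\<alpha> - x0)\<^sup>2 + 2 * (cmod (F (of_real \<alpha>)))\<^sup>2 * (pi / (\<alpha> - x0)))" .
qed

section \<open>The Hardy space and the backward shift\<close>

lemma H2_line_bound:
  assumes "f \<in> H2" "I \<in> qS"
  shows "\<exists>B\<ge>0. \<forall>t>0. (\<integral>\<^sup>+y. ennreal ((norm (f (slice_pt I t y)))\<^sup>2) \<partial>lborel) \<le> ennreal B"
proof -
  obtain B where B: "\<forall>I\<in>qS. \<forall>x>0. integrable lborel (\<lambda>y. (norm (f (slice_pt I x y)))\<^sup>2) \<and>
          (\<integral>y. (norm (f (slice_pt I x y)))\<^sup>2 \<partial>lborel) \<le> B"
    using assms(1) by (auto simp: H2_def)
  show ?thesis
  proof (intro exI[of _ "max B 0"] conjI allI impI)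
    fix t :: real assume t: "t > 0"
    have i: "integrable lborel (\<lambda>y. (norm (f (slice_pt I t y)))\<^sup>2)" using B assms(2) t by auto
    have "(\<integral>\<^sup>+y. ennreal ((norm (f (slice_pt I t y)))\<^sup>2) \<partial>lborel) = ennreal (\<integral>y. (norm (f (slice_pt I t y)))\<^sup>2 \<partial>lborel)"
      using i by (intro nn_integral_eq_integral) auto
    also have "\<dots> \<le> ennreal (max B 0)"
    proof (intro ennreal_leI)
      have "(\<integral>y. (norm (f (slice_pt I t y)))\<^sup>2 \<partial>lborel) \<le> B" using B assms(2) t by auto
      then show "(\<integral>y. (norm (f (slice_pt I t y)))\<^sup>2 \<partial>lborel) \<le> max B 0" by linarith
    qed
    finally show "(\<integral>\<^sup>+y. ennreal ((norm (f (slice_pt I t y)))\<^sup>2) \<partial>lborel) \<le> ennreal (max B 0)" .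
  qed simp
qed

lemma H2_qsplit_holomorphic:
  assumes "f \<in> H2" "I \<in> qS"
  shows "(\<lambda>z. qsplit1 I (f (qemb I z))) holomorphic_on {z. 0 < Re z}"
    "(\<lambda>z. qsplit2 I (f (qemb I z))) holomorphic_on {z. 0 < Re z}"
proof -
  have sh: "slice_hol Hplus f" using assms(1) by (simp add: H2_def)
  show "(\<lambda>z. qsplit1 I (f (qemb I z))) holomorphic_on {z. 0 < Re z}"
    by (rule slice_hol_qsplit_holomorphic[OF sh assms(2) bounded_linear_qsplit1 qsplit1_qmul_qemb[OF assms(2)]])
  show "(\<lambda>z. qsplit2 I (f (qemb I z))) holomorphic_on {z. 0 < Re z}"
    by (rule slice_hol_qsplit_holomorphic[OF sh assms(2) bounded_linear_qsplit2 qsplit2_qmul_qemb[OF assms(2)]])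
qed

lemma qsplit_nn_integral_le:
  assumes "I \<in> qS" "(\<integral>\<^sup>+y. ennreal ((norm (h y))\<^sup>2) \<partial>lborel) \<le> ennreal B"
  shows "(\<integral>\<^sup>+y. ennreal ((cmod (qsplit1 I (h y)))\<^sup>2) \<partial>lborel) \<le> ennreal B"
    "(\<integral>\<^sup>+y. ennreal ((cmod (qsplit2 I (h y)))\<^sup>2) \<partial>lborel) \<le> ennreal B"
  using qsplit_norm_le[OF assms(1)]
  by (auto intro!: order_trans[OF nn_integral_mono assms(2)] ennreal_leI)

lemma H2_qsplit_line_bound:
  assumes "f \<in> H2" "I \<in> qS"
  shows "\<exists>B\<ge>0. (\<forall>t>0. (\<integral>\<^sup>+y. ennreal ((cmod (qsplit1 I (f (qemb I (Complex t y)))))\<^sup>2) \<partial>lborel) \<le> ennreal B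
                  \<and> (\<integral>\<^sup>+y. ennreal ((cmod (qsplit2 I (f (qemb I (Complex t y)))))\<^sup>2) \<partial>lborel) \<le> ennreal B)"
proof -
  obtain B where B: "B \<ge> 0" "\<forall>t>0. (\<integral>\<^sup>+y. ennreal ((norm (f (slice_pt I t y)))\<^sup>2) \<partial>lborel) \<le> ennreal B"
    using H2_line_bound[OF assms] by auto
  show ?thesis
  proof (intro exI[of _ B] conjI allI impI B(1))
    fix t :: real assume t: "t > 0"
    have b: "(\<integral>\<^sup>+y. ennreal ((norm (f (qemb I (Complex t y))))\<^sup>2) \<partial>lborel) \<le> ennreal B"
      using B(2) t by (simp add: slice_pt_qemb)
    show "(\<integral>\<^sup>+y. ennreal ((cmod (qsplit1 I (f (qemb I (Complex t y)))))\<^sup>2) \<partial>lborel) \<le> ennreal B"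
      by (rule qsplit_nn_integral_le(1)[OF assms(2) b])
    show "(\<integral>\<^sup>+y. ennreal ((cmod (qsplit2 I (f (qemb I (Complex t y)))))\<^sup>2) \<partial>lborel) \<le> ennreal B"
      by (rule qsplit_nn_integral_le(2)[OF assms(2) b])
  qed
qed

lemma H2_qsplit_strip_L2:
  assumes "f \<in> H2" "I \<in> qS"
  obtains B where "B \<ge> 0" "\<And>x0. strip_L2 x0 B (\<lambda>z. qsplit1 I (f (qemb I z)))" "\<And>x0. strip_L2 x0 B (\<lambda>z. qsplit2 I (f (qemb I z)))"
    "\<And>t. t > 0 \<Longrightarrow> (\<integral>\<^sup>+y. ennreal ((cmod (qsplit1 I (f (qemb I (Complex t y)))))\<^sup>2) \<partial>lborel) \<le> ennreal B"
    "\<And>t. t > 0 \<Longrightarrow> (\<integral>\<^sup>+y. ennreal ((cmod (qsplit2 I (f (qemb I (Complex t y)))))\<^sup>2) \<partial>lborel) \<le> ennreal B"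
proof -
  obtain B where B: "B \<ge> 0" "\<forall>t>0. (\<integral>\<^sup>+y. ennreal ((cmod (qsplit1 I (f (qemb I (Complex t y)))))\<^sup>2) \<partial>lborel) \<le> ennreal B
                  \<and> (\<integral>\<^sup>+y. ennreal ((cmod (qsplit2 I (f (qemb I (Complex t y)))))\<^sup>2) \<partial>lborel) \<le> ennreal B"
    using H2_qsplit_line_bound[OF assms] by auto
  have h: "strip_L2 x0 B (\<lambda>z. qsplit1 I (f (qemb I z)))" "strip_L2 x0 B (\<lambda>z. qsplit2 I (f (qemb I z)))" for x0
    unfolding strip_L2_def using B H2_qsplit_holomorphic[OF assms] by (auto intro: holomorphic_on_subset)
  show ?thesis using that[OF B(1) h] B by auto
qed

definition qstrip_L2 :: "quat \<Rightarrow> real \<Rightarrow> (quat \<Rightarrow> quat) \<Rightarrow> bool" where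
  "qstrip_L2 I x0 h \<longleftrightarrow>
     (\<exists>B. strip_L2 x0 B (\<lambda>z. qsplit1 I (h (qemb I z))) \<and> strip_L2 x0 B (\<lambda>z. qsplit2 I (h (qemb I z))))"

text \<open>By definition, \<open>H2_inner I h k\<close> is the limit of \<open>qline_inner I x h k\<close> as \<open>x \<rightarrow> 0+\<close>.\<close>
definition qline_inner :: "quat \<Rightarrow> real \<Rightarrow> (quat \<Rightarrow> quat) \<Rightarrow> (quat \<Rightarrow> quat) \<Rightarrow> quat" where
  "qline_inner I x h k = (\<integral>y. qmul (qcnj (k (slice_pt I x y))) (h (slice_pt I x y)) \<partial>lborel)"

lemma H2_qstrip_L2:
  assumes "f \<in> H2" "I \<in> qS"
  shows "qstrip_L2 I x0 f"
  using H2_qsplit_strip_L2[OF assms] unfolding qstrip_L2_def by metis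

lemma qline_inner_qsplit:
  assumes I: "I \<in> qS" and h: "qstrip_L2 I x0 h" and k: "qstrip_L2 I x0 k" and x: "0 < x" "x < x0"
  defines "h1 \<equiv> \<lambda>z. qsplit1 I (h (qemb I z))" and "h2 \<equiv> \<lambda>z. qsplit2 I (h (qemb I z))"
    and "k1 \<equiv> \<lambda>z. qsplit1 I (k (qemb I z))" and "k2 \<equiv> \<lambda>z. qsplit2 I (k (qemb I z))"
    and "P \<equiv> \<lambda>A C. \<integral>y. A (Complex x y) * cnj (C (Complex x y)) \<partial>lborel"
  shows "integrable lborel (\<lambda>y. qmul (qcnj (k (slice_pt I x y))) (h (slice_pt I x y)))"
    and "qline_inner I x h k = qemb I (P h1 k1 + P k2 h2) + qmul (qemb I (P h2 k1 - P k2 h1)) (qJ I)"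
proof -
  obtain B B' where "strip_L2 x0 B h1" "strip_L2 x0 B h2" "strip_L2 x0 B' k1" "strip_L2 x0 B' k2"
    using h k by (auto simp: qstrip_L2_def h1_def h2_def k1_def k2_def)
  then have c: "strip_L2 x0 (max B B') h1" "strip_L2 x0 (max B B') h2"
      "strip_L2 x0 (max B B') k1" "strip_L2 x0 (max B B') k2"
    by (meson strip_L2_mono max.cobounded1 max.cobounded2)+
  have intP: "integrable lborel (\<lambda>y. A (Complex x y) * cnj (C (Complex x y)))"
    if "strip_L2 x0 (max B B') A" "strip_L2 x0 (max B B') C" for A C
    using that x by (intro integrable_mult_cnj_L2[where B="max B B'" and B'="max B B'"]
        strip_L2_line_measurable strip_L2_line_bound) (auto simp: strip_L2_def)
  define w where "w y = qmul (qcnj (k (slice_pt I x y))) (h (slice_pt I x y))" for y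
  have c1: "qsplit1 I (w y) = h1 (Complex x y) * cnj (k1 (Complex x y)) + k2 (Complex x y) * cnj (h2 (Complex x y))" for y
    by (simp add: w_def qsplit1_qcnj_qmul[OF I] h1_def h2_def k1_def k2_def slice_pt_qemb mult.commute)
  have c2: "qsplit2 I (w y) = h2 (Complex x y) * cnj (k1 (Complex x y)) - k2 (Complex x y) * cnj (h1 (Complex x y))" for y
    by (simp add: w_def qsplit2_qcnj_qmul[OF I] h1_def h2_def k1_def k2_def slice_pt_qemb mult.commute)
  have i1: "integrable lborel (\<lambda>y. qsplit1 I (w y))" unfolding c1
    using intP[OF c(1,3)] intP[OF c(4,2)] by (rule Bochner_Integration.integrable_add)
  have i2: "integrable lborel (\<lambda>y. qsplit2 I (w y))" unfolding c2
    using intP[OF c(2,3)] intP[OF c(4,1)] by (rule Bochner_Integration.integrable_diff)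
  show "integrable lborel (\<lambda>y. qmul (qcnj (k (slice_pt I x y))) (h (slice_pt I x y)))"
    using qsplit_integral(1)[OF I i1 i2] by (simp add: w_def[abs_def])
  have "(\<integral>y. qsplit1 I (w y) \<partial>lborel) = P h1 k1 + P k2 h2"
    unfolding c1 P_def using intP[OF c(1,3)] intP[OF c(4,2)] by (rule Bochner_Integration.integral_add)
  moreover have "(\<integral>y. qsplit2 I (w y) \<partial>lborel) = P h2 k1 - P k2 h1"
    unfolding c2 P_def using intP[OF c(2,3)] intP[OF c(4,1)] by (rule Bochner_Integration.integral_diff)
  ultimately show "qline_inner I x h k = qemb I (P h1 k1 + P k2 h2) + qmul (qemb I (P h2 k1 - P k2 h1)) (qJ I)"
    using qsplit_integral(2)[OF I i1 i2] by (simp add: qline_inner_def w_def[abs_def])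
qed

lemma tendsto_qline_inner_H2_inner:
  assumes I: "I \<in> qS" and h: "qstrip_L2 I x0 h" and k: "qstrip_L2 I x0 k" and x0: "x0 > 0"
  shows "((\<lambda>x. qline_inner I x h k) \<longlongrightarrow> H2_inner I h k) (at_right 0)"
proof -
  define h1 where "h1 z = qsplit1 I (h (qemb I z))" for z
  define h2 where "h2 z = qsplit2 I (h (qemb I z))" for z
  define k1 where "k1 z = qsplit1 I (k (qemb I z))" for z
  define k2 where "k2 z = qsplit2 I (k (qemb I z))" for z
  define P where "P A C x = (\<integral>y. A (Complex x y) * cnj (C (Complex x y)) \<partial>lborel)"
    for A C :: "complex \<Rightarrow> complex" and x
  obtain B B' where "strip_L2 x0 B h1" "strip_L2 x0 B h2" "strip_L2 x0 B' k1" "strip_L2 x0 B' k2"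
    using h k by (auto simp: qstrip_L2_def h1_def[abs_def] h2_def[abs_def] k1_def[abs_def] k2_def[abs_def])
  then have c: "strip_L2 x0 (max B B') h1" "strip_L2 x0 (max B B') h2"
      "strip_L2 x0 (max B B') k1" "strip_L2 x0 (max B B') k2"
    by (meson strip_L2_mono max.cobounded1 max.cobounded2)+
  have ex: "\<exists>L. (P A C \<longlongrightarrow> L) (at_right 0)"
    if "strip_L2 x0 (max B B') A" "strip_L2 x0 (max B B') C" for A C
    using strip_pairing_has_limit[OF that x0] by (simp add: P_def[abs_def])
  obtain L1 L2 L3 L4 where L: "(P h1 k1 \<longlongrightarrow> L1) (at_right 0)" "(P k2 h2 \<longlongrightarrow> L2) (at_right 0)"
      "(P h2 k1 \<longlongrightarrow> L3) (at_right 0)" "(P k2 h1 \<longlongrightarrow> L4) (at_right 0)"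
    using ex[OF c(1,3)] ex[OF c(4,2)] ex[OF c(2,3)] ex[OF c(4,1)] by blast
  have lim: "((\<lambda>x. qemb I (P h1 k1 x + P k2 h2 x) + qmul (qemb I (P h2 k1 x - P k2 h1 x)) (qJ I))
      \<longlongrightarrow> qemb I (L1 + L2) + qmul (qemb I (L3 - L4)) (qJ I)) (at_right 0)"
    by (intro tendsto_add tendsto_diff L bounded_linear.tendsto[OF bounded_linear_qemb]
        bounded_linear.tendsto[OF bounded_linear_qmul_right])
  have "eventually (\<lambda>x. 0 < x \<and> x < x0) (at_right 0)"
    using x0 by (auto simp: eventually_at_right_field)
  then have "eventually (\<lambda>x. qemb I (P h1 k1 x + P k2 h2 x) + qmul (qemb I (P h2 k1 x - P k2 h1 x)) (qJ I)
      = qline_inner I x h k) (at_right 0)"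
  proof (rule eventually_mono)
    fix x assume "0 < x \<and> x < x0"
    then show "qemb I (P h1 k1 x + P k2 h2 x) + qmul (qemb I (P h2 k1 x - P k2 h1 x)) (qJ I) = qline_inner I x h k"
      using qline_inner_qsplit(2)[OF I h k, of x]
      by (simp add: P_def h1_def[abs_def] h2_def[abs_def] k1_def[abs_def] k2_def[abs_def])
  qed
  with lim have "((\<lambda>x. qline_inner I x h k) \<longlongrightarrow> qemb I (L1 + L2) + qmul (qemb I (L3 - L4)) (qJ I)) (at_right 0)"
    by (rule Lim_transform_eventually)
  moreover from this have "H2_inner I h k = qemb I (L1 + L2) + qmul (qemb I (L3 - L4)) (qJ I)"
    unfolding H2_inner_def qline_inner_def[symmetric] by (intro tendsto_Lim) simp_all
  ultimately show ?thesis by simp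
qed

lemma qsplit_Rsh:
  assumes I: "I \<in> qS" and z: "Re z \<noteq> \<alpha>"
  shows "qsplit1 I (Rsh \<alpha> f (qemb I z)) = (qsplit1 I (f (qemb I z)) - qsplit1 I (f (qreal \<alpha>))) / (z - of_real \<alpha>)"
    "qsplit2 I (Rsh \<alpha> f (qemb I z)) = (qsplit2 I (f (qemb I z)) - qsplit2 I (f (qreal \<alpha>))) / (z - of_real \<alpha>)"
proof -
  have ne: "qemb I z \<noteq> qreal \<alpha>"
    using z qS_imag_unit(1)[OF I] by (auto simp: quat_eq_iff)
  have R: "Rsh \<alpha> f (qemb I z) = qmul (qemb I (inverse (z - of_real \<alpha>))) (f (qemb I z) - f (qreal \<alpha>))"
    using ne by (simp add: Rsh_def qreal_qemb[of \<alpha> I] qemb_diff[symmetric] qinv_qemb[OF I])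
  interpret l1: bounded_linear "qsplit1 I" by (rule bounded_linear_qsplit1)
  interpret l2: bounded_linear "qsplit2 I" by (rule bounded_linear_qsplit2)
  show "qsplit1 I (Rsh \<alpha> f (qemb I z)) = (qsplit1 I (f (qemb I z)) - qsplit1 I (f (qreal \<alpha>))) / (z - of_real \<alpha>)"
    unfolding R qsplit1_qmul_qemb[OF I] by (simp add: l1.diff divide_inverse mult.commute)
  show "qsplit2 I (Rsh \<alpha> f (qemb I z)) = (qsplit2 I (f (qemb I z)) - qsplit2 I (f (qreal \<alpha>))) / (z - of_real \<alpha>)"
    unfolding R qsplit2_qmul_qemb[OF I] by (simp add: l2.diff divide_inverse mult.commute)
qed

lemma Rsh_qstrip_L2:
  assumes f: "f \<in> H2" and I: "I \<in> qS" and x0: "0 < x0" "x0 < \<alpha>"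
  shows "qstrip_L2 I x0 (Rsh \<alpha> f)"
proof -
  obtain B where B: "B \<ge> 0"
    "\<And>t. t > 0 \<Longrightarrow> (\<integral>\<^sup>+y. ennreal ((cmod (qsplit1 I (f (qemb I (Complex t y)))))\<^sup>2) \<partial>lborel) \<le> ennreal B"
    "\<And>t. t > 0 \<Longrightarrow> (\<integral>\<^sup>+y. ennreal ((cmod (qsplit2 I (f (qemb I (Complex t y)))))\<^sup>2) \<partial>lborel) \<le> ennreal B"
    using H2_qsplit_strip_L2[OF f I] by metis
  have hol1: "(\<lambda>z. qsplit1 I (f (qemb I z))) holomorphic_on {z. 0 < Re z}" and hol2: "(\<lambda>z. qsplit2 I (f (qemb I z))) holomorphic_on {z. 0 < Re z}"
    using H2_qsplit_holomorphic[OF f I] by auto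
  obtain B1 where c1: "strip_L2 x0 B1 (\<lambda>z. (qsplit1 I (f (qemb I z)) - qsplit1 I (f (qemb I (of_real \<alpha>)))) / (z - of_real \<alpha>))"
    using difference_quotient_strip_L2[OF hol1 B(2) B(1) x0] by blast
  obtain B2 where c2: "strip_L2 x0 B2 (\<lambda>z. (qsplit2 I (f (qemb I z)) - qsplit2 I (f (qemb I (of_real \<alpha>)))) / (z - of_real \<alpha>))"
    using difference_quotient_strip_L2[OF hol2 B(3) B(1) x0] by blast
  have u1: "strip_L2 x0 B1 (\<lambda>z. qsplit1 I (Rsh \<alpha> f (qemb I z)))"
    by (rule strip_L2_cong[OF c1]) (use x0 in \<open>simp add: qsplit_Rsh[OF I] qreal_qemb[of \<alpha> I]\<close>)
  have u2: "strip_L2 x0 B2 (\<lambda>z. qsplit2 I (Rsh \<alpha> f (qemb I z)))"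
    by (rule strip_L2_cong[OF c2]) (use x0 in \<open>simp add: qsplit_Rsh[OF I] qreal_qemb[of \<alpha> I]\<close>)
  show ?thesis
    unfolding qstrip_L2_def using strip_L2_mono[OF u1, of "max B1 B2"] strip_L2_mono[OF u2, of "max B1 B2"] by auto
qed

lemma cauchy_formula_slice_line:
  assumes I: "I \<in> qS" and f: "f \<in> H2" and x: "0 < x" "x < \<alpha>"
  shows "integrable lborel (\<lambda>y. qmul (qinv (slice_pt I x y - qreal \<alpha>)) (f (slice_pt I x y)))"
    "(\<integral>y. qmul (qinv (slice_pt I x y - qreal \<alpha>)) (f (slice_pt I x y)) \<partial>lborel) = (- 2 * pi) *\<^sub>R f (qreal \<alpha>)"
proof -
  obtain B where B: "B \<ge> 0"
    "\<And>t. t > 0 \<Longrightarrow> (\<integral>\<^sup>+y. ennreal ((cmod (qsplit1 I (f (qemb I (Complex t y)))))\<^sup>2) \<partial>lborel) \<le> ennreal B"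
    "\<And>t. t > 0 \<Longrightarrow> (\<integral>\<^sup>+y. ennreal ((cmod (qsplit2 I (f (qemb I (Complex t y)))))\<^sup>2) \<partial>lborel) \<le> ennreal B"
    using H2_qsplit_strip_L2[OF f I] by metis
  define w where "w y = qmul (qinv (slice_pt I x y - qreal \<alpha>)) (f (slice_pt I x y))" for y
  have c1: "qsplit1 I (w y) = qsplit1 I (f (qemb I (Complex x y))) / (Complex x y - of_real \<alpha>)" for y
    unfolding w_def slice_pt_minus_qreal qinv_qemb[OF I] qsplit1_qmul_qemb[OF I] by (simp add: slice_pt_qemb divide_inverse mult.commute)
  have c2: "qsplit2 I (w y) = qsplit2 I (f (qemb I (Complex x y))) / (Complex x y - of_real \<alpha>)" for y
    unfolding w_def slice_pt_minus_qreal qinv_qemb[OF I] qsplit2_qmul_qemb[OF I] by (simp add: slice_pt_qemb divide_inverse mult.commute)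
  have hol1: "(\<lambda>z. qsplit1 I (f (qemb I z))) holomorphic_on {z. 0 < Re z}" and hol2: "(\<lambda>z. qsplit2 I (f (qemb I z))) holomorphic_on {z. 0 < Re z}"
    using H2_qsplit_holomorphic[OF f I] by auto
  have i1: "integrable lborel (\<lambda>y. qsplit1 I (w y))" unfolding c1
    using x by (intro integrable_div_vertical_line[OF hol1 B(2) B(1)]) auto
  have i2: "integrable lborel (\<lambda>y. qsplit2 I (w y))" unfolding c2
    using x by (intro integrable_div_vertical_line[OF hol2 B(3) B(1)]) auto
  show "integrable lborel (\<lambda>y. qmul (qinv (slice_pt I x y - qreal \<alpha>)) (f (slice_pt I x y)))"
    using qsplit_integral(1)[OF I i1 i2] by (simp add: w_def[abs_def])
  have e1: "(\<integral>y. qsplit1 I (w y) \<partial>lborel) = - (2 * pi) * qsplit1 I (f (qreal \<alpha>))"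
    unfolding c1 using cauchy_formula_vertical_line[OF hol1 B(2) B(1) x] by (simp add: qreal_qemb[of \<alpha> I])
  have e2: "(\<integral>y. qsplit2 I (w y) \<partial>lborel) = - (2 * pi) * qsplit2 I (f (qreal \<alpha>))"
    unfolding c2 using cauchy_formula_vertical_line[OF hol2 B(3) B(1) x] by (simp add: qreal_qemb[of \<alpha> I])
  have "(\<integral>y. w y \<partial>lborel) = qemb I (- (2 * pi) * qsplit1 I (f (qreal \<alpha>))) + qmul (qemb I (- (2 * pi) * qsplit2 I (f (qreal \<alpha>)))) (qJ I)"
    using qsplit_integral(2)[OF I i1 i2] e1 e2 by simp
  also have "\<dots> = (- 2 * pi) *\<^sub>R (qemb I (qsplit1 I (f (qreal \<alpha>))) + qmul (qemb I (qsplit2 I (f (qreal \<alpha>)))) (qJ I))"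
  proof -
    have "\<And>z::complex. qemb I (- (2 * complex_of_real pi * z)) = (- 2 * pi) *\<^sub>R qemb I z"
      by (simp add: quat_eq_iff algebra_simps)
    then show ?thesis by (simp add: qmul_scaleR_left scaleR_add_right qmul_minus_left)
  qed
  also have "\<dots> = (- 2 * pi) *\<^sub>R f (qreal \<alpha>)" using qsplit_recompose[OF I, of "f (qreal \<alpha>)"] by simp
  finally show "(\<integral>y. qmul (qinv (slice_pt I x y - qreal \<alpha>)) (f (slice_pt I x y)) \<partial>lborel) = (- 2 * pi) *\<^sub>R f (qreal \<alpha>)"
    by (simp add: w_def[abs_def])
qed

lemma kernel_sum_slice_line:
  assumes I: "I \<in> qS" and x: "x < \<alpha>" "x < \<beta>"
  shows "integrable lborel (\<lambda>y. qinv (slice_pt I x y - qreal \<alpha>) + qcnj (qinv (slice_pt I x y - qreal \<beta>)))"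
    "(\<integral>y. qinv (slice_pt I x y - qreal \<alpha>) + qcnj (qinv (slice_pt I x y - qreal \<beta>)) \<partial>lborel) = qreal (- 2 * pi)"
proof -
  define e where "e y = 1 / (Complex x y - of_real \<alpha>) + cnj (1 / (Complex x y - of_real \<beta>))" for y
  have eq: "qinv (slice_pt I x y - qreal \<alpha>) + qcnj (qinv (slice_pt I x y - qreal \<beta>)) = qemb I (e y)" for y
    by (simp add: e_def slice_pt_minus_qreal qinv_qemb[OF I] qcnj_qemb[OF I] qemb_add inverse_eq_divide)
  have ie: "integrable lborel e" using kernel_sum_vertical_line(1)[OF x] by (simp add: e_def[abs_def])
  have ve: "(\<integral>y. e y \<partial>lborel) = - 2 * pi" using kernel_sum_vertical_line(2)[OF x] by (simp add: e_def[abs_def])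
  show "integrable lborel (\<lambda>y. qinv (slice_pt I x y - qreal \<alpha>) + qcnj (qinv (slice_pt I x y - qreal \<beta>)))"
    unfolding eq by (rule integrable_bounded_linear[OF bounded_linear_qemb ie])
  have "(\<integral>y. qemb I (e y) \<partial>lborel) = qemb I (\<integral>y. e y \<partial>lborel)"
    by (rule integral_bounded_linear[OF bounded_linear_qemb ie])
  then show "(\<integral>y. qinv (slice_pt I x y - qreal \<alpha>) + qcnj (qinv (slice_pt I x y - qreal \<beta>)) \<partial>lborel) = qreal (- 2 * pi)"
    unfolding eq ve by (simp add: qreal_qemb[of _ I])
qed

lemma Rsh_slice_pt:
  assumes "I \<in> qS" "x \<noteq> \<alpha>"
  shows "Rsh \<alpha> f (slice_pt I x y) = qmul (qinv (slice_pt I x y - qreal \<alpha>)) (f (slice_pt I x y) - f (qreal \<alpha>))"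
  using slice_pt_neq_qreal[OF assms] by (simp add: Rsh_def)

lemma slice_pt_eq_Rsh:
  assumes "I \<in> qS" "x \<noteq> \<alpha>"
  shows "f (slice_pt I x y) = qmul (slice_pt I x y - qreal \<alpha>) (Rsh \<alpha> f (slice_pt I x y)) + f (qreal \<alpha>)"
  using slice_pt_neq_qreal[OF assms] by (simp add: Rsh_slice_pt[OF assms] qmul_qinv_cancel_left)

lemma qmul_boundary_terms_expand:
  fixes b m m' a F G :: quat
  shows "qmul (qcnj b) (qmul m (F - a)) + qmul (qcnj (qmul m' (G - b))) a
   = qmul (qcnj b) (qmul m F) + qmul (qcnj (qmul m' G)) a - qmul (qmul (qcnj b) (m + qcnj m')) a"
  by (simp add: quat_eq_iff algebra_simps)

text \<open>Cauchy's formula evaluates the parts involving \<open>f\<close> and \<open>g\<close>; the constant parts combine into the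
  kernel \<open>(p - \<alpha>)\<^sup>-\<^sup>1 + conj ((p - \<beta>)\<^sup>-\<^sup>1)\<close>, whose integral is \<open>-2\<pi>\<close>.\<close>
lemma qline_integral_boundary_terms:
  assumes I: "I \<in> qS" and f: "f \<in> H2" and g: "g \<in> H2" and x: "0 < x" "x < \<alpha>" "x < \<beta>"
  defines "D \<equiv> \<lambda>y. qmul (qcnj (g (qreal \<beta>))) (Rsh \<alpha> f (slice_pt I x y))
                    + qmul (qcnj (Rsh \<beta> g (slice_pt I x y))) (f (qreal \<alpha>))"
  shows "integrable lborel D"
    and "(\<integral>y. D y \<partial>lborel) = - ((2 * pi) *\<^sub>R qmul (qcnj (g (qreal \<beta>))) (f (qreal \<alpha>)))"
proof -
  define p where "p y = slice_pt I x y" for y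
  define a where "a = f (qreal \<alpha>)"
  define b where "b = g (qreal \<beta>)"
  define X1 where "X1 y = qmul (qcnj b) (qmul (qinv (p y - qreal \<alpha>)) (f (p y)))" for y
  define X2 where "X2 y = qmul (qcnj (qmul (qinv (p y - qreal \<beta>)) (g (p y)))) a" for y
  define E where "E y = qinv (p y - qreal \<alpha>) + qcnj (qinv (p y - qreal \<beta>))" for y
  define X3 where "X3 y = qmul (qmul (qcnj b) (E y)) a" for y
  have "D y = X1 y + X2 y - X3 y" for y
    unfolding D_def X1_def X2_def X3_def E_def p_def a_def b_def
      Rsh_slice_pt[OF I less_imp_neq[OF x(2)]] Rsh_slice_pt[OF I less_imp_neq[OF x(3)]]
    by (rule qmul_boundary_terms_expand)
  then have DX: "D = (\<lambda>y. X1 y + X2 y - X3 y)" by auto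
  have cf: "integrable lborel (\<lambda>y. qmul (qinv (p y - qreal \<alpha>)) (f (p y)))"
    "(\<integral>y. qmul (qinv (p y - qreal \<alpha>)) (f (p y)) \<partial>lborel) = (- 2 * pi) *\<^sub>R a"
    using cauchy_formula_slice_line[OF I f x(1,2)] by (simp_all add: p_def a_def)
  have cg: "integrable lborel (\<lambda>y. qmul (qinv (p y - qreal \<beta>)) (g (p y)))"
    "(\<integral>y. qmul (qinv (p y - qreal \<beta>)) (g (p y)) \<partial>lborel) = (- 2 * pi) *\<^sub>R b"
    using cauchy_formula_slice_line[OF I g x(1,3)] by (simp_all add: p_def b_def)
  have ce: "integrable lborel E" "(\<integral>y. E y \<partial>lborel) = qreal (- 2 * pi)"
    using kernel_sum_slice_line[OF I x(2,3)] by (simp_all add: E_def[abs_def] p_def)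
  have bl1: "bounded_linear (\<lambda>q. qmul (qcnj b) q)" by (rule bounded_linear_qmul_left)
  have bl2: "bounded_linear (\<lambda>q. qmul (qcnj q) a)"
    using bounded_linear_compose[OF bounded_linear_qmul_right bounded_linear_qcnj] by (simp add: o_def)
  have bl3: "bounded_linear (\<lambda>q. qmul (qmul (qcnj b) q) a)"
    using bounded_linear_compose[OF bounded_linear_qmul_right bounded_linear_qmul_left] by (simp add: o_def)
  have iX: "integrable lborel X1" "integrable lborel X2" "integrable lborel X3"
    unfolding X1_def[abs_def] X2_def[abs_def] X3_def[abs_def]
    by (intro integrable_bounded_linear[OF bl1 cf(1)] integrable_bounded_linear[OF bl2 cg(1)]
        integrable_bounded_linear[OF bl3 ce(1)])+
  show "integrable lborel D" unfolding DX using iX by auto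
  have "(\<integral>y. D y \<partial>lborel) = (\<integral>y. X1 y \<partial>lborel) + (\<integral>y. X2 y \<partial>lborel) - (\<integral>y. X3 y \<partial>lborel)"
    unfolding DX using iX by (simp add: Bochner_Integration.integral_diff Bochner_Integration.integral_add)
  also have "\<dots> = qmul (qcnj b) ((- 2 * pi) *\<^sub>R a) + qmul (qcnj ((- 2 * pi) *\<^sub>R b)) a
      - qmul (qmul (qcnj b) (qreal (- 2 * pi))) a"
    unfolding X1_def X2_def X3_def integral_bounded_linear[OF bl1 cf(1)] integral_bounded_linear[OF bl2 cg(1)]
      integral_bounded_linear[OF bl3 ce(1)] cf(2) cg(2) ce(2) ..
  also have "\<dots> = - ((2 * pi) *\<^sub>R qmul (qcnj b) a)" by (simp add: quat_eq_iff algebra_simps)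
  finally show "(\<integral>y. D y \<partial>lborel) = - ((2 * pi) *\<^sub>R qmul (qcnj (g (qreal \<beta>))) (f (qreal \<alpha>)))"
    by (simp add: a_def b_def)
qed

text \<open>Pointwise on the line \<open>p = x + I y\<close>, after substituting \<open>f(p) = (p - \<alpha>) R\<^sub>\<alpha>f(p) + f(\<alpha>)\<close> and
  \<open>g(p) = (p - \<beta>) R\<^sub>\<beta>g(p) + g(\<beta>)\<close>: the coefficients add up to \<open>conj (p - \<beta>) + (p - \<alpha>) + \<alpha> + \<beta> = 2 x\<close>.\<close>
lemma qline_pointwise_identity:
  fixes I u v a b :: quat
  assumes "I$1 = 0"
  shows "qmul (qcnj (qmul (qreal x + y *\<^sub>R I - qreal \<beta>) v + b)) u + qmul (qcnj v) (qmul (qreal x + y *\<^sub>R I - qreal \<alpha>) u + a)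
     + (\<alpha> + \<beta>) *\<^sub>R qmul (qcnj v) u
    = (2 * x) *\<^sub>R qmul (qcnj v) u + (qmul (qcnj b) u + qmul (qcnj v) a)"
  using assms by (simp add: quat_eq_iff algebra_simps)

lemma qline_inner_identity:
  assumes I: "I \<in> qS" and f: "f \<in> H2" and g: "g \<in> H2" and x: "0 < x" "x < \<alpha>" "x < \<beta>"
  shows "qline_inner I x (Rsh \<alpha> f) g + qline_inner I x f (Rsh \<beta> g) + (\<alpha> + \<beta>) *\<^sub>R qline_inner I x (Rsh \<alpha> f) (Rsh \<beta> g)
     = (2 * x) *\<^sub>R qline_inner I x (Rsh \<alpha> f) (Rsh \<beta> g) - (2 * pi) *\<^sub>R qmul (qcnj (g (qreal \<beta>))) (f (qreal \<alpha>))"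
proof -
  define x0 where "x0 = (x + min \<alpha> \<beta>) / 2"
  have x0: "x < x0" "x0 < \<alpha>" "x0 < \<beta>" using x by (auto simp: x0_def)
  have sf: "qstrip_L2 I x0 f" and sg: "qstrip_L2 I x0 g"
    and su: "qstrip_L2 I x0 (Rsh \<alpha> f)" and sv: "qstrip_L2 I x0 (Rsh \<beta> g)"
    using H2_qstrip_L2[OF f I] H2_qstrip_L2[OF g I] Rsh_qstrip_L2[OF f I, of x0] Rsh_qstrip_L2[OF g I, of x0]
      x x0 by auto
  have i1: "integrable lborel (\<lambda>y. qmul (qcnj (g (slice_pt I x y))) (Rsh \<alpha> f (slice_pt I x y)))"
    and i2: "integrable lborel (\<lambda>y. qmul (qcnj (Rsh \<beta> g (slice_pt I x y))) (f (slice_pt I x y)))"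
    and i3: "integrable lborel (\<lambda>y. qmul (qcnj (Rsh \<beta> g (slice_pt I x y))) (Rsh \<alpha> f (slice_pt I x y)))"
    using qline_inner_qsplit(1)[OF I su sg] qline_inner_qsplit(1)[OF I sf sv] qline_inner_qsplit(1)[OF I su sv]
      x(1) x0(1) by auto
  define p where "p y = slice_pt I x y" for y
  define u where "u y = Rsh \<alpha> f (p y)" for y
  define v where "v y = Rsh \<beta> g (p y)" for y
  define D where "D y = qmul (qcnj (g (qreal \<beta>))) (u y) + qmul (qcnj (v y)) (f (qreal \<alpha>))" for y
  have pw: "qmul (qcnj (g (p y))) (u y) + qmul (qcnj (v y)) (f (p y)) + (\<alpha> + \<beta>) *\<^sub>R qmul (qcnj (v y)) (u y)
      = (2 * x) *\<^sub>R qmul (qcnj (v y)) (u y) + D y" for y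
  proof -
    have "f (p y) = qmul (qreal x + y *\<^sub>R I - qreal \<alpha>) (u y) + f (qreal \<alpha>)"
      "g (p y) = qmul (qreal x + y *\<^sub>R I - qreal \<beta>) (v y) + g (qreal \<beta>)"
      using slice_pt_eq_Rsh[OF I] x by (auto simp: p_def u_def v_def slice_pt_def)
    then show ?thesis unfolding D_def by (simp only: qline_pointwise_identity[OF qS_imag_unit(1)[OF I]])
  qed
  have iD: "integrable lborel D" and vD: "(\<integral>y. D y \<partial>lborel) = - ((2 * pi) *\<^sub>R qmul (qcnj (g (qreal \<beta>))) (f (qreal \<alpha>)))"
    using qline_integral_boundary_terms[OF I f g x] by (simp_all add: D_def[abs_def] u_def v_def p_def)
  have i: "integrable lborel (\<lambda>y. qmul (qcnj (g (p y))) (u y))" "integrable lborel (\<lambda>y. qmul (qcnj (v y)) (f (p y)))"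
    "integrable lborel (\<lambda>y. qmul (qcnj (v y)) (u y))"
    using i1 i2 i3 by (simp_all add: u_def v_def p_def)
  have "qline_inner I x (Rsh \<alpha> f) g + qline_inner I x f (Rsh \<beta> g) + (\<alpha> + \<beta>) *\<^sub>R qline_inner I x (Rsh \<alpha> f) (Rsh \<beta> g)
      = (\<integral>y. qmul (qcnj (g (p y))) (u y) + qmul (qcnj (v y)) (f (p y)) + (\<alpha> + \<beta>) *\<^sub>R qmul (qcnj (v y)) (u y) \<partial>lborel)"
    using i by (simp add: qline_inner_def u_def v_def p_def Bochner_Integration.integral_add)
  also have "\<dots> = (\<integral>y. (2 * x) *\<^sub>R qmul (qcnj (v y)) (u y) + D y \<partial>lborel)" by (simp only: pw)
  also have "\<dots> = (2 * x) *\<^sub>R qline_inner I x (Rsh \<alpha> f) (Rsh \<beta> g) + (\<integral>y. D y \<partial>lborel)"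
    using i iD by (simp add: qline_inner_def u_def v_def p_def Bochner_Integration.integral_add)
  finally show ?thesis by (simp add: vD)
qed

theorem lemma4p13:
  fixes \<alpha> \<beta> :: real and f g :: "quat \<Rightarrow> quat" and I :: quat
  assumes "\<alpha> > 0" and "\<beta> > 0" and "f \<in> H2" and "g \<in> H2" and "I \<in> qS"
  shows "H2_inner I (Rsh \<alpha> f) g + H2_inner I f (Rsh \<beta> g)
          + (\<alpha> + \<beta>) *\<^sub>R H2_inner I (Rsh \<alpha> f) (Rsh \<beta> g)
          + (2 * pi) *\<^sub>R qmul (qcnj (g (qreal \<beta>))) (f (qreal \<alpha>)) = 0"
proof -
  define x0 where "x0 = min \<alpha> \<beta> / 2"
  have x0: "0 < x0" "x0 < \<alpha>" "x0 < \<beta>" using assms(1,2) by (auto simp: x0_def)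
  have f: "qstrip_L2 I x0 f" and g: "qstrip_L2 I x0 g"
    and u: "qstrip_L2 I x0 (Rsh \<alpha> f)" and v: "qstrip_L2 I x0 (Rsh \<beta> g)"
    using H2_qstrip_L2 Rsh_qstrip_L2 assms x0 by auto
  define T where "T x = qline_inner I x (Rsh \<alpha> f) g + qline_inner I x f (Rsh \<beta> g)
    + (\<alpha> + \<beta>) *\<^sub>R qline_inner I x (Rsh \<alpha> f) (Rsh \<beta> g)" for x
  define K where "K = (2 * pi) *\<^sub>R qmul (qcnj (g (qreal \<beta>))) (f (qreal \<alpha>))"
  have lim: "(T \<longlongrightarrow> H2_inner I (Rsh \<alpha> f) g + H2_inner I f (Rsh \<beta> g)
      + (\<alpha> + \<beta>) *\<^sub>R H2_inner I (Rsh \<alpha> f) (Rsh \<beta> g)) (at_right 0)"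
    unfolding T_def using assms(5) f g u v x0 by (intro tendsto_intros tendsto_qline_inner_H2_inner)
  have "((\<lambda>x. (2 * x) *\<^sub>R qline_inner I x (Rsh \<alpha> f) (Rsh \<beta> g) - K)
      \<longlongrightarrow> (2 * 0) *\<^sub>R H2_inner I (Rsh \<alpha> f) (Rsh \<beta> g) - K) (at_right 0)"
    using assms(5) u v x0 by (intro tendsto_intros tendsto_qline_inner_H2_inner)
  moreover have "eventually (\<lambda>x. (2 * x) *\<^sub>R qline_inner I x (Rsh \<alpha> f) (Rsh \<beta> g) - K = T x) (at_right 0)"
    using x0 qline_inner_identity[OF assms(5,3,4)]
    by (auto simp: eventually_at_right_field T_def K_def intro!: exI[of _ x0])
  ultimately have "(T \<longlongrightarrow> (2 * 0) *\<^sub>R H2_inner I (Rsh \<alpha> f) (Rsh \<beta> g) - K) (at_right 0)"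
    by (rule Lim_transform_eventually)
  with lim have "H2_inner I (Rsh \<alpha> f) g + H2_inner I f (Rsh \<beta> g) + (\<alpha> + \<beta>) *\<^sub>R H2_inner I (Rsh \<alpha> f) (Rsh \<beta> g)
      = (2 * 0) *\<^sub>R H2_inner I (Rsh \<alpha> f) (Rsh \<beta> g) - K"
    by (rule tendsto_unique[OF trivial_limit_at_right_real])
  then show ?thesis by (simp add: K_def)
qed
end
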